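(* Let $G$ be a finite group, $\{(Q_k,\widetilde Q_k)\}_k$ a family of pairs as in the context, and $Q$ a finite $p$-group. The map $$\coprod_k \psi:\ \coprod_k R(Q,\widetilde Q_k)\times_{\mathrm{Aut}(\widetilde Q_k|Q_k)}\mathrm{Cen}_{Q_k}(\widetilde Q_k,\widetilde Q_k,G)\longrightarrow \mathrm{nCen}(Q,G),\qquad \psi(\gamma\times[\delta])=[\delta\circ\gamma],$$ is a well-defined isomorphism of $\mathrm{Out}(Q)$-sets, natural in $G$.
   Context: Let $p$ be a fixed prime; all groups are finite. For groups $Q,G$, $\mathrm{Inj}(Q,G)$ denotes the set of $G$-conjugacy classes $[\alpha]$ of injective homomorphisms $\alpha:Q\to G$ (where $\alpha\sim c_g\circ\alpha$ for $g\in G$); $\mathrm{Out}(Q)$ acts by precomposition. $\mathrm{Cen}(Q,G)\subseteq\mathrm{Inj}(Q,G)$ is the set of classes $[\alpha]$ such that $C_G(\alpha(Q))/Z(\alpha(Q))$ has order prime to $p$, and $\mathrm{nCen}(Q,G)=\mathrm{Inj}(Q,G)\setminus\mathrm{Cen}(Q,G)$. For a $p$-subgroup $H\le G$, $\widetilde H$ denotes a Sylow $p$-subgroup of $H\cdot C_G(H)$. Given $p$-groups $P_1\le\widetilde P_1$ and $P_2\le\widetilde P_2$, we write $\widetilde P_1\sim\widetilde P_2$ (the pairs are equivalent) if there is an isomorphism $s:\widetilde P_1\to\widetilde P_2$ with $s(P_1)=P_2$. A pair arising in $G$ is $(H,\widetilde H)$ with $H\le G$ a $p$-subgroup such that $p$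 divides $|C_G(H)/Z(H)|$. Fix a family $\{(Q_k,\widetilde Q_k)\}_k$ of pairwise inequivalent pairs of $p$-groups $Q_k\le\widetilde Q_k$, each equivalent to a pair arising in $G$, and containing a representative of the equivalence class of every pair arising in $G$. $\mathrm{Cen}_{Q_k}(\widetilde Q_k,\widetilde Q_k,G)$ is the set of classes $[\beta]\in\mathrm{Cen}(\widetilde Q_k,G)$ such that $\widetilde{\beta(Q_k)}\sim\widetilde Q_k$ (i.e. $(\beta(Q_k),\widetilde{\beta(Q_k)})$ is equivalent to $(Q_k,\widetilde Q_k)$). $R(Q,\widetilde Q_k)$ is the set of injective homomorphisms $\alpha:Q\to\widetilde Q_k$ with $\alpha(Q)=Q_k$, and $\mathrm{Aut}(\widetilde Q_k|Q_k)=\{a\in\mathrm{Aut}(\widetilde Q_k): a(Q_k)=Q_k\}$, which acts on $R(Q,\widetilde Q_k)$ by postcomposition and on $\mathrm{Cen}_{Q_k}(\widetilde Q_k,\widetilde Q_k,G)$ by precomposition; $\times_{\mathrm{Aut}(\widetilde Q_k|Q_k)}$ is the balanced product, in which $a\gamma\times[\delta]=\gamma\times[\delta a]$. $\mathrm{Out}(Q)$ acts on the balanced product via precomposition on $R(Q,\widetilde Q_k)$. *)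

theory Defs
  imports "HOL-Algebra.Algebra"
begin

text \<open>Injective homomorphisms Q \<rightarrow> G (as HOL functions; only values on carrier Q matter).\<close>
definition inj_hom :: "('a,'c) monoid_scheme \<Rightarrow> ('b,'d) monoid_scheme \<Rightarrow> ('a \<Rightarrow> 'b) set" where
  "inj_hom Q G = {\<alpha> \<in> hom Q G. inj_on \<alpha> (carrier Q)}"

definition conj_equiv :: "('a,'c) monoid_scheme \<Rightarrow> ('b,'d) monoid_scheme \<Rightarrow> (('a \<Rightarrow> 'b) \<times> ('a \<Rightarrow> 'b)) set" where
  "conj_equiv Q G = {(\<alpha>,\<beta>). \<alpha> \<in> inj_hom Q G \<and> \<beta> \<in> inj_hom Q G \<and>
      (\<exists>g\<in>carrier G. \<forall>x\<in>carrier Q. \<beta> x = g \<otimes>\<^bsub>G\<^esub> \<alpha> x \<otimes>\<^bsub>G\<^esub> inv\<^bsub>G\<^esub> g)}"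

definition Inj :: "('a,'c) monoid_scheme \<Rightarrow> ('b,'d) monoid_scheme \<Rightarrow> ('a \<Rightarrow> 'b) set set" where
  "Inj Q G = inj_hom Q G // conj_equiv Q G"

definition inj_class :: "('a,'c) monoid_scheme \<Rightarrow> ('b,'d) monoid_scheme \<Rightarrow> ('a \<Rightarrow> 'b) \<Rightarrow> ('a \<Rightarrow> 'b) set" where
  "inj_class Q G \<alpha> = conj_equiv Q G `` {\<alpha>}"

definition centralizer :: "('b,'d) monoid_scheme \<Rightarrow> 'b set \<Rightarrow> 'b set" where
  "centralizer G H = {g \<in> carrier G. \<forall>h\<in>H. g \<otimes>\<^bsub>G\<^esub> h = h \<otimes>\<^bsub>G\<^esub> g}"

text \<open>|C_G(H)/Z(H)|, where Z(H) = H \<inter> C_G(H) is the center of H.\<close>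
definition cz_order :: "('b,'d) monoid_scheme \<Rightarrow> 'b set \<Rightarrow> nat" where
  "cz_order G H = order ((G\<lparr>carrier := centralizer G H\<rparr>) Mod (H \<inter> centralizer G H))"

definition Cen :: "nat \<Rightarrow> ('a,'c) monoid_scheme \<Rightarrow> ('b,'d) monoid_scheme \<Rightarrow> ('a \<Rightarrow> 'b) set set" where
  "Cen p Q G = {c \<in> Inj Q G. \<exists>\<alpha>\<in>c. \<not> p dvd cz_order G (\<alpha> ` carrier Q)}"

definition nCen :: "nat \<Rightarrow> ('a,'c) monoid_scheme \<Rightarrow> ('b,'d) monoid_scheme \<Rightarrow> ('a \<Rightarrow> 'b) set set" where
  "nCen p Q G = Inj Q G - Cen p Q G"

definition p_subgroup :: "('b,'d) monoid_scheme \<Rightarrow> nat \<Rightarrow> 'b set \<Rightarrow> bool" where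
  "p_subgroup G p H \<longleftrightarrow> subgroup H G \<and> (\<exists>n. card H = p ^ n)"

definition sylow_of :: "('b,'d) monoid_scheme \<Rightarrow> nat \<Rightarrow> 'b set \<Rightarrow> 'b set \<Rightarrow> bool" where
  "sylow_of G p K S \<longleftrightarrow> p_subgroup G p S \<and> S \<subseteq> K \<and> \<not> p dvd (card K div card S)"

definition is_tilde :: "('b,'d) monoid_scheme \<Rightarrow> nat \<Rightarrow> 'b set \<Rightarrow> 'b set \<Rightarrow> bool" where
  "is_tilde G p H S \<longleftrightarrow> sylow_of G p (H <#>\<^bsub>G\<^esub> centralizer G H) S"

definition pair_equiv :: "('a,'c) monoid_scheme \<Rightarrow> 'a set \<Rightarrow> ('b,'d) monoid_scheme \<Rightarrow> 'b set \<Rightarrow> bool" where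
  "pair_equiv T1 P1 T2 P2 \<longleftrightarrow> (\<exists>s. s \<in> iso T1 T2 \<and> s ` P1 = P2)"

text \<open>H is the small group of a pair arising in G.\<close>
definition arising :: "('b,'d) monoid_scheme \<Rightarrow> nat \<Rightarrow> 'b set \<Rightarrow> bool" where
  "arising G p H \<longleftrightarrow> p_subgroup G p H \<and> p dvd cz_order G H"

definition Cen_k :: "nat \<Rightarrow> ('a,'c) monoid_scheme \<Rightarrow> 'a set \<Rightarrow> ('b,'d) monoid_scheme \<Rightarrow> ('a \<Rightarrow> 'b) set set" where
  "Cen_k p Qt Qs G = {c \<in> Cen p Qt G. \<exists>\<beta>\<in>c. \<exists>S. is_tilde G p (\<beta> ` Qs) S \<and>
       pair_equiv (G\<lparr>carrier := S\<rparr>) (\<beta> ` Qs) Qt Qs}"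

definition R_set :: "('q,'e) monoid_scheme \<Rightarrow> ('a,'c) monoid_scheme \<Rightarrow> 'a set \<Rightarrow> ('q \<Rightarrow> 'a) set" where
  "R_set Q Qt Qs = {\<alpha> \<in> inj_hom Q Qt \<inter> extensional (carrier Q). \<alpha> ` carrier Q = Qs}"

definition Aut_rel :: "('a,'c) monoid_scheme \<Rightarrow> 'a set \<Rightarrow> ('a \<Rightarrow> 'a) set" where
  "Aut_rel Qt Qs = {a \<in> iso Qt Qt. a ` Qs = Qs}"

definition bal_rel :: "nat \<Rightarrow> ('q,'e) monoid_scheme \<Rightarrow> ('a,'c) monoid_scheme \<Rightarrow> 'a set \<Rightarrow> ('b,'d) monoid_scheme
     \<Rightarrow> ((('q \<Rightarrow> 'a) \<times> ('a \<Rightarrow> 'b) set) \<times> (('q \<Rightarrow> 'a) \<times> ('a \<Rightarrow> 'b) set)) set" where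
  "bal_rel p Q Qt Qs G = {((\<gamma>1,c1),(\<gamma>2,c2)).
      (\<gamma>1,c1) \<in> R_set Q Qt Qs \<times> Cen_k p Qt Qs G \<and> (\<gamma>2,c2) \<in> R_set Q Qt Qs \<times> Cen_k p Qt Qs G \<and>
      (\<exists>a\<in>Aut_rel Qt Qs. \<gamma>1 = compose (carrier Q) a \<gamma>2 \<and> (\<exists>\<delta>\<in>c1. (\<lambda>x. \<delta> (a x)) \<in> c2))}"

definition Bal :: "nat \<Rightarrow> ('q,'e) monoid_scheme \<Rightarrow> ('a,'c) monoid_scheme \<Rightarrow> 'a set \<Rightarrow> ('b,'d) monoid_scheme
     \<Rightarrow> (('q \<Rightarrow> 'a) \<times> ('a \<Rightarrow> 'b) set) set set" where
  "Bal p Q Qt Qs G = (R_set Q Qt Qs \<times> Cen_k p Qt Qs G) // bal_rel p Q Qt Qs G"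

definition psi :: "('q,'e) monoid_scheme \<Rightarrow> ('b,'d) monoid_scheme \<Rightarrow> (('q \<Rightarrow> 'a) \<times> ('a \<Rightarrow> 'b) set) set \<Rightarrow> ('q \<Rightarrow> 'b) set" where
  "psi Q G x = (let r = (SOME r. r \<in> x); \<delta> = (SOME \<delta>. \<delta> \<in> snd r) in inj_class Q G (\<lambda>q. \<delta> (fst r q)))"

text \<open>Action of phi \<in> Aut(Q) (hence of Out(Q)) by precomposition.\<close>
definition act_inj :: "('q,'e) monoid_scheme \<Rightarrow> ('b,'d) monoid_scheme \<Rightarrow> ('q \<Rightarrow> 'q) \<Rightarrow> ('q \<Rightarrow> 'b) set \<Rightarrow> ('q \<Rightarrow> 'b) set" where
  "act_inj Q G \<phi> c = inj_class Q G (\<lambda>q. (SOME \<alpha>. \<alpha> \<in> c) (\<phi> q))"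

definition act_bal :: "nat \<Rightarrow> ('q,'e) monoid_scheme \<Rightarrow> ('a,'c) monoid_scheme \<Rightarrow> 'a set \<Rightarrow> ('b,'d) monoid_scheme
     \<Rightarrow> ('q \<Rightarrow> 'q) \<Rightarrow> (('q \<Rightarrow> 'a) \<times> ('a \<Rightarrow> 'b) set) set \<Rightarrow> (('q \<Rightarrow> 'a) \<times> ('a \<Rightarrow> 'b) set) set" where
  "act_bal p Q Qt Qs G \<phi> x = (let r = (SOME r. r \<in> x) in
      bal_rel p Q Qt Qs G `` {(compose (carrier Q) (fst r) \<phi>, snd r)})"

definition map_inj :: "('q,'e) monoid_scheme \<Rightarrow> ('b2,'d2) monoid_scheme \<Rightarrow> ('b \<Rightarrow> 'b2) \<Rightarrow> ('q \<Rightarrow> 'b) set \<Rightarrow> ('q \<Rightarrow> 'b2) set" where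
  "map_inj Q G' f c = inj_class Q G' (\<lambda>q. f ((SOME \<alpha>. \<alpha> \<in> c) q))"

definition map_bal :: "nat \<Rightarrow> ('q,'e) monoid_scheme \<Rightarrow> ('a,'c) monoid_scheme \<Rightarrow> 'a set \<Rightarrow> ('b2,'d2) monoid_scheme
     \<Rightarrow> ('b \<Rightarrow> 'b2) \<Rightarrow> (('q \<Rightarrow> 'a) \<times> ('a \<Rightarrow> 'b) set) set \<Rightarrow> (('q \<Rightarrow> 'a) \<times> ('a \<Rightarrow> 'b2) set) set" where
  "map_bal p Q Qt Qs G' f x = (let r = (SOME r. r \<in> x) in
      bal_rel p Q Qt Qs G' `` {(fst r, map_inj Qt G' f (snd r))})"

end

theory Submission
  imports Defs "HOL-Algebra.Group_Action"
begin

(*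
  For a p-subgroup P of G write P~ for a Sylow p-subgroup of P C_G(P).  From the product formula
  and Sylow's conjugacy theorem (proved via fixed points of p-group actions) we get:
  P <= P~;  P~ is p-centric;  p divides |C_G(P)/Z(P)| iff P < P~;  and any two choices of P~ are
  conjugate by an element of C_G(P).  All of this is invariant under group isomorphisms.
  The key observation (Cen_k_tilde) is that for every representative delta of a class in
  Cen_{Qs}(Qt, Qt, G) the subgroup delta(Qt) is a choice of delta(Qs)~.  Hence
    * psi lands in nCen, because the pair is proper: delta(Qs) < delta(Qs)~ = delta(Qt);
    * psi is injective: equal values give equivalent pairs, hence the same summand
      (Cen_k_index_unique), and the automorphism of Qt balancing two representatives comes from
      a centralizing conjugation between the two choices of delta(Qs)~ (bal_rel_of_same_composite);
    * psi is surjective: a class [alpha] in nCen yields the arising pair (alpha(Q), alpha(Q)~),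
      equivalent via some s to a member of the family, and [alpha] = psi((s o alpha) x [s^-1])
      (psi_hits_class).
  Equivariance and naturality hold because both actions can be computed on any representative.
*)


section \<open>Products of subgroups and centralizers\<close>

lemma card_fibers:
  assumes "finite A" "f ` A = B" "\<And>b. b \<in> B \<Longrightarrow> card {a\<in>A. f a = b} = k"
  shows "card A = card B * k"
proof -
  have A: "A = (\<Union>b\<in>B. {a\<in>A. f a = b})" using assms(2) by auto
  have "card (\<Union>b\<in>B. {a\<in>A. f a = b}) = (\<Sum>b\<in>B. card {a\<in>A. f a = b})"
  proof (rule card_UN_disjoint)
    show "finite B" using assms(1,2) by blast
    show "\<forall>b\<in>B. finite {a \<in> A. f a = b}" using assms(1) by auto
    show "\<forall>i\<in>B. \<forall>j\<in>B. i \<noteq> j \<longrightarrow> {a \<in> A. f a = i} \<inter> {a \<in> A. f a = j} = {}" by blast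
  qed
  also have "\<dots> = card B * k" using assms(3) by simp
  finally show ?thesis using A by simp
qed

lemma set_mult_memI: "h \<in> H \<Longrightarrow> k \<in> K \<Longrightarrow> x = h \<otimes>\<^bsub>G\<^esub> k \<Longrightarrow> x \<in> H <#>\<^bsub>G\<^esub> K"
  unfolding set_mult_def by blast

lemma set_mult_memE: "x \<in> H <#>\<^bsub>G\<^esub> K \<Longrightarrow> (\<And>h k. h \<in> H \<Longrightarrow> k \<in> K \<Longrightarrow> x = h \<otimes>\<^bsub>G\<^esub> k \<Longrightarrow> P) \<Longrightarrow> P"
  unfolding set_mult_def by blast

context group begin

lemma mult_inv_cancel_left [simp]: "x \<in> carrier G \<Longrightarrow> y \<in> carrier G \<Longrightarrow> x \<otimes> (inv x \<otimes> y) = y"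
  by (simp add: m_assoc[symmetric])

lemma inv_mult_cancel_left [simp]: "x \<in> carrier G \<Longrightarrow> y \<in> carrier G \<Longrightarrow> inv x \<otimes> (x \<otimes> y) = y"
  by (simp add: m_assoc[symmetric])

lemma centralizer_subgroup:
  assumes "H \<subseteq> carrier G"
  shows "subgroup (centralizer G H) G"
proof (rule subgroupI)
  show "centralizer G H \<subseteq> carrier G" by (auto simp: centralizer_def)
  show "centralizer G H \<noteq> {}" using assms by (auto simp: centralizer_def intro!: exI[of _ \<one>])
  fix a assume a: "a \<in> centralizer G H"
  show "inv a \<in> centralizer G H" unfolding centralizer_def
  proof (safe)
    show "inv a \<in> carrier G" using a by (auto simp: centralizer_def)
    fix h assume h: "h \<in> H"
    have ac: "a \<in> carrier G" and hc: "h \<in> carrier G" using a h assms by (auto simp: centralizer_def)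
    have e: "a \<otimes> h = h \<otimes> a" using a h by (auto simp: centralizer_def)
    have "inv a \<otimes> h = inv a \<otimes> (h \<otimes> a) \<otimes> inv a" using ac hc by (simp add: m_assoc)
    also have "\<dots> = inv a \<otimes> (a \<otimes> h) \<otimes> inv a" using e by simp
    also have "\<dots> = h \<otimes> inv a" using ac hc by (simp add: m_assoc[symmetric])
    finally show "inv a \<otimes> h = h \<otimes> inv a" .
  qed
next
  fix a b assume a: "a \<in> centralizer G H" and b: "b \<in> centralizer G H"
  show "a \<otimes> b \<in> centralizer G H" unfolding centralizer_def
  proof safe
    show "a \<otimes> b \<in> carrier G" using a b by (auto simp: centralizer_def)
    fix h assume h: "h \<in> H"
    have ac: "a \<in> carrier G" and bc: "b \<in> carrier G" and hc: "h \<in> carrier G"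
      using a b h assms by (auto simp: centralizer_def)
    have 1: "a \<otimes> h = h \<otimes> a" and 2: "b \<otimes> h = h \<otimes> b" using a b h by (auto simp: centralizer_def)
    have "a \<otimes> b \<otimes> h = a \<otimes> (b \<otimes> h)" using ac bc hc by (simp add: m_assoc)
    also have "\<dots> = (a \<otimes> h) \<otimes> b" using ac bc hc 2 by (simp add: m_assoc)
    also have "\<dots> = h \<otimes> (a \<otimes> b)" using ac bc hc 1 by (simp add: m_assoc)
    finally show "a \<otimes> b \<otimes> h = h \<otimes> (a \<otimes> b)" .
  qed
qed

text \<open>Since the centralizer of \<open>H\<close> normalizes \<open>H\<close>, the product \<open>H C\<^sub>G(H)\<close> is a subgroup.\<close>
lemma centralizer_mult_subgroup:
  assumes "subgroup H G"
  shows "subgroup (H <#> centralizer G H) G"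
proof -
  have Hc: "H \<subseteq> carrier G" using assms subgroup.subset by blast
  interpret C: subgroup "centralizer G H" G using centralizer_subgroup[OF Hc] .
  interpret H: subgroup H G by fact
  have comm: "c \<otimes> h = h \<otimes> c" if "c \<in> centralizer G H" "h \<in> H" for c h
    using that unfolding centralizer_def by blast
  show ?thesis
  proof (rule subgroupI)
    show "H <#> centralizer G H \<subseteq> carrier G"
      by (auto elim!: set_mult_memE)
    have "\<one> \<in> H <#> centralizer G H" by (rule set_mult_memI[of \<one> _ \<one>]) auto
    then show "H <#> centralizer G H \<noteq> {}" by blast
    fix a assume "a \<in> H <#> centralizer G H"
    then obtain h c where h: "h \<in> H" and c: "c \<in> centralizer G H" and a: "a = h \<otimes> c"
      by (rule set_mult_memE)
    have "inv a = inv c \<otimes> inv h" using a h c by (simp add: inv_mult_group)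
    also have "\<dots> = inv h \<otimes> inv c" using comm[of "inv c" "inv h"] h c by simp
    finally show "inv a \<in> H <#> centralizer G H" by (rule set_mult_memI[rotated 2]) (use h c in auto)
  next
    fix a b assume "a \<in> H <#> centralizer G H" "b \<in> H <#> centralizer G H"
    then obtain h c h' c' where h: "h \<in> H" and c: "c \<in> centralizer G H" and a: "a = h \<otimes> c"
      and h': "h' \<in> H" and c': "c' \<in> centralizer G H" and b: "b = h' \<otimes> c'"
      by (meson set_mult_memE)
    have "a \<otimes> b = h \<otimes> (c \<otimes> h') \<otimes> c'" using a b h c h' c' by (simp add: m_assoc)
    also have "\<dots> = (h \<otimes> h') \<otimes> (c \<otimes> c')" using comm[OF c h'] h c h' c' by (simp add: m_assoc)
    finally show "a \<otimes> b \<in> H <#> centralizer G H" by (rule set_mult_memI[rotated 2]) (use h c h' c' in auto)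
  qed
qed

text \<open>Each element of \<open>HK\<close> has exactly \<open>|H \<inter> K|\<close> factorisations \<open>h k\<close>:
  they are \<open>(h\<^sub>0 t, t\<inverse> k\<^sub>0)\<close> for \<open>t \<in> H \<inter> K\<close>.\<close>
lemma set_mult_fibre_card:
  assumes "subgroup H G" "subgroup K G" and y: "y \<in> H <#> K"
  shows "card {a \<in> H \<times> K. (\<lambda>(h,k). h \<otimes> k) a = y} = card (H \<inter> K)"
proof -
  interpret H: subgroup H G by fact
  interpret K: subgroup K G by fact
  let ?f = "\<lambda>(h,k). h \<otimes> k"
  obtain h0 k0 where h0: "h0 \<in> H" and k0: "k0 \<in> K" and y0: "y = h0 \<otimes> k0"
    using y unfolding set_mult_def by auto
  let ?g = "\<lambda>t. (h0 \<otimes> t, inv t \<otimes> k0)"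
  have "bij_betw ?g (H \<inter> K) {a \<in> H \<times> K. ?f a = y}"
  proof (rule bij_betw_imageI)
    show "inj_on ?g (H \<inter> K)"
    proof (rule inj_onI)
      fix s t assume "s \<in> H \<inter> K" "t \<in> H \<inter> K" "?g s = ?g t"
      then have "h0 \<otimes> s = h0 \<otimes> t" by simp
      then show "s = t" using h0 \<open>s \<in> H \<inter> K\<close> \<open>t \<in> H \<inter> K\<close> by simp
    qed
    have into: "?g t \<in> {a \<in> H \<times> K. ?f a = y}" if t: "t \<in> H \<inter> K" for t
    proof -
      have tc: "t \<in> carrier G" using t by auto
      have "h0 \<otimes> t \<otimes> (inv t \<otimes> k0) = h0 \<otimes> k0" using tc h0 k0
        by (simp add: m_assoc[symmetric]) (simp add: m_assoc)
      then show ?thesis using t h0 k0 y0 by auto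
    qed
    have onto: "a \<in> ?g ` (H \<inter> K)" if a: "a \<in> {a \<in> H \<times> K. ?f a = y}" for a
    proof -
      obtain h k where a': "a = (h,k)" and hk: "h \<in> H" "k \<in> K" and e: "h \<otimes> k = h0 \<otimes> k0"
        using a y0 by auto
      have hc: "h \<in> carrier G" and kc: "k \<in> carrier G" and h0c: "h0 \<in> carrier G" and k0c: "k0 \<in> carrier G"
        using hk h0 k0 by auto
      define t where "t = inv h0 \<otimes> h"
      have tH: "t \<in> H" using hk h0 by (auto simp: t_def)
      have "inv h0 \<otimes> (h \<otimes> k) \<otimes> inv k = inv h0 \<otimes> (h0 \<otimes> k0) \<otimes> inv k" using e by simp
      then have e2: "inv h0 \<otimes> h \<otimes> k = k0" using hc kc h0c k0c by (simp add: m_assoc[symmetric])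
      have "k0 \<otimes> inv k = (inv h0 \<otimes> h \<otimes> k) \<otimes> inv k" using e2 by simp
      also have "\<dots> = t" using hc kc h0c by (simp add: t_def m_assoc)
      finally have tk: "t = k0 \<otimes> inv k" by simp
      then have tK: "t \<in> K" using hk k0 by auto
      have "h = h0 \<otimes> t" using hc h0c by (simp add: t_def m_assoc[symmetric])
      moreover have "k = inv t \<otimes> k0" using tk kc k0c
        by (simp add: inv_mult_group m_assoc)
      ultimately have "a = ?g t" using a' by simp
      then show ?thesis using tH tK by blast
    qed
    show "?g ` (H \<inter> K) = {a \<in> H \<times> K. ?f a = y}"
      using into onto by blast
  qed
  then show ?thesis by (simp add: bij_betw_same_card)
qed

lemma product_formula:
  assumes "subgroup H G" "subgroup K G" "finite H" "finite K"
  shows "card (H <#> K) * card (H \<inter> K) = card H * card K"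
proof -
  have img: "(\<lambda>(h,k). h \<otimes> k) ` (H \<times> K) = H <#> K" unfolding set_mult_def by auto
  have "card (H \<times> K) = card (H <#> K) * card (H \<inter> K)"
    by (rule card_fibers[OF _ img set_mult_fibre_card[OF assms(1,2)]]) (use assms(3,4) in auto)
  then show ?thesis by (simp add: card_cartesian_product)
qed

lemma subgroup_card_dvd:
  assumes "finite (carrier G)" "subgroup A G" "subgroup B G" "A \<subseteq> B"
  shows "card A dvd card B"
proof -
  have "subgroup A (G\<lparr>carrier := B\<rparr>)" using subgroup_incl assms by blast
  moreover have "group (G\<lparr>carrier := B\<rparr>)" using assms(3) subgroup.subgroup_is_group is_group by blast
  ultimately have "card (rcosets\<^bsub>G\<lparr>carrier := B\<rparr>\<^esub> A) * card A = order (G\<lparr>carrier := B\<rparr>)"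
    using group.lagrange by blast
  moreover have "order (G\<lparr>carrier := B\<rparr>) = card B" by (simp add: order_def)
  ultimately show ?thesis by (metis dvd_triv_right)
qed

end


section \<open>Conjugacy of Sylow subgroups\<close>

text \<open>A \<open>p\<close>-group acting on a finite set of cardinality prime to \<open>p\<close> has a fixed point:
  otherwise every orbit has order divisible by \<open>p\<close>.\<close>
lemma p_group_action_fixed_point:
  assumes act: "group_action P E \<phi>" and fin: "finite E" and p: "Factorial_Ring.prime (p::nat)"
    and ord: "order P = p ^ n" and nd: "\<not> p dvd card E"
  shows "\<exists>A\<in>E. \<forall>h\<in>carrier P. \<phi> h A = A"
proof (rule ccontr)
  assume nofix: "\<not> ?thesis"
  interpret group_action P E \<phi> by (rule act)
  have orbit_dvd: "p dvd card (orbit P \<phi> A)" if A: "A \<in> E" for A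
  proof -
    have "card (orbit P \<phi> A) * card (stabilizer P \<phi> A) = order P"
      using orbit_stabilizer_theorem[OF A] .
    then have "card (orbit P \<phi> A) dvd p ^ n" using ord by (metis dvd_triv_left)
    then obtain i where i: "card (orbit P \<phi> A) = p ^ i" using divides_primepow_nat[OF p] by blast
    have "i \<noteq> 0"
    proof
      assume "i = 0"
      then have "card (orbit P \<phi> A) = 1" using i by simp
      then have orb: "orbit P \<phi> A = {A}" using orbit_refl[OF A] by (metis card_1_singletonE singletonD)
      have "\<phi> h A = A" if "h \<in> carrier P" for h using orb that unfolding orbit_def by blast
      then show False using nofix A by blast
    qed
    then show ?thesis using i by simp
  qed
  have "(\<Sum>orb\<in>orbits P E \<phi>. \<Sum>x\<in>orb. (1::nat)) = (\<Sum>x\<in>E. 1)"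
    using disjoint_sum[OF fin] .
  then have "card E = (\<Sum>orb\<in>orbits P E \<phi>. card orb)" by simp
  moreover have "p dvd (\<Sum>orb\<in>orbits P E \<phi>. card orb)"
    by (rule dvd_sum) (use orbit_dvd in \<open>auto simp: orbits_def\<close>)
  ultimately show False using nd by simp
qed

context group begin

lemma rcoset_translate:
  assumes K: "subgroup K G" and S: "S \<subseteq> K" and A: "A \<in> {S #> x | x. x \<in> K}" and h: "h \<in> K"
  shows "A #> inv h \<in> {S #> x | x. x \<in> K}"
proof -
  have Kc: "K \<subseteq> carrier G" using K subgroup.subset by blast
  obtain x where x: "x \<in> K" "A = S #> x" using A by blast
  have xc: "x \<in> carrier G" and hc: "h \<in> carrier G" using x h Kc by auto
  have "A #> inv h = S #> (x \<otimes> inv h)" using x S Kc coset_mult_assoc[OF _ xc inv_closed[OF hc]] by auto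
  moreover have "x \<otimes> inv h \<in> K" using x h K by (auto intro: subgroup.m_closed subgroup.m_inv_closed)
  ultimately show ?thesis by blast
qed

lemma rcoset_translation_action:
  assumes K: "subgroup K G" and S: "S \<subseteq> K" and P: "subgroup P G" "P \<subseteq> K"
    and E: "E = {S #> x | x. x \<in> K}"
  shows "group_action (G\<lparr>carrier := P\<rparr>) E (\<lambda>h. \<lambda>A\<in>E. A #> inv h)"
proof -
  define \<phi> where "\<phi> = (\<lambda>h. \<lambda>A\<in>E. A #> inv h)"
  have Pc: "P \<subseteq> carrier G" using P subgroup.subset by blast
  have Esub: "A \<subseteq> carrier G" if "A \<in> E" for A
    using that S K subgroup.subset r_coset_subset_G unfolding E by blast
  have mapE: "A #> inv h \<in> E" if "A \<in> E" "h \<in> P" for A h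
    using rcoset_translate[OF K S] that P(2) unfolding E by blast
  have phi_comp: "\<phi> h1 (\<phi> h2 A) = A #> inv (h1 \<otimes> h2)" if "A \<in> E" "h1 \<in> P" "h2 \<in> P" for A h1 h2
  proof -
    have c: "h1 \<in> carrier G" "h2 \<in> carrier G" using that Pc by auto
    have "\<phi> h1 (\<phi> h2 A) = A #> inv h2 #> inv h1" using that mapE by (simp add: \<phi>_def)
    also have "\<dots> = A #> (inv h2 \<otimes> inv h1)" using Esub[OF that(1)] c by (simp add: coset_mult_assoc)
    also have "\<dots> = A #> inv (h1 \<otimes> h2)" using c by (simp add: inv_mult_group)
    finally show ?thesis .
  qed
  have phi_bij: "\<phi> h \<in> Bij E" if h: "h \<in> P" for h
  proof -
    have hc: "h \<in> carrier G" using h Pc by blast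
    have ih: "inv h \<in> P" using h P by (auto intro: subgroup.m_inv_closed)
    have "bij_betw (\<phi> h) E E"
    proof (rule bij_betw_byWitness[where f' = "\<phi> (inv h)"])
      show "\<forall>a\<in>E. \<phi> (inv h) (\<phi> h a) = a" using phi_comp[OF _ ih h] hc Esub by simp
      show "\<forall>a\<in>E. \<phi> h (\<phi> (inv h) a) = a" using phi_comp[OF _ h ih] hc Esub by simp
      show "\<phi> h ` E \<subseteq> E" unfolding \<phi>_def using mapE[OF _ h] by auto
      show "\<phi> (inv h) ` E \<subseteq> E" unfolding \<phi>_def using mapE[OF _ ih] by auto
    qed
    then show ?thesis unfolding Bij_def \<phi>_def by simp
  qed
  have phi_hom: "\<phi> (h1 \<otimes> h2) = compose E (\<phi> h1) (\<phi> h2)" if h: "h1 \<in> P" "h2 \<in> P" for h1 h2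
  proof
    fix A show "\<phi> (h1 \<otimes> h2) A = compose E (\<phi> h1) (\<phi> h2) A"
    proof (cases "A \<in> E")
      case True
      have "compose E (\<phi> h1) (\<phi> h2) A = \<phi> h1 (\<phi> h2 A)" using True by (simp add: compose_def)
      also have "\<dots> = A #> inv (h1 \<otimes> h2)" using phi_comp[OF True h] .
      finally show ?thesis using True by (simp add: \<phi>_def)
    qed (simp add: \<phi>_def compose_def)
  qed
  have "group_action (G\<lparr>carrier := P\<rparr>) E \<phi>"
    unfolding group_action_def group_hom_def group_hom_axioms_def
  proof (intro conjI)
    show "group (G\<lparr>carrier := P\<rparr>)" using P(1) subgroup.subgroup_is_group is_group by blast
    show "group (BijGroup E)" by (rule group_BijGroup)
    show "\<phi> \<in> hom (G\<lparr>carrier := P\<rparr>) (BijGroup E)"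
      using phi_bij phi_hom by (intro homI) (simp_all add: BijGroup_def)
  qed
  then show ?thesis unfolding \<phi>_def .
qed

lemma sylow_conj:
  assumes fin: "finite (carrier G)" and p: "Factorial_Ring.prime (p::nat)"
    and K: "subgroup K G" and S: "subgroup S G" "S \<subseteq> K" and nd: "\<not> p dvd (card K div card S)"
    and P: "subgroup P G" "P \<subseteq> K" "card P = p ^ n"
  shows "\<exists>x\<in>K. \<forall>y\<in>P. x \<otimes> y \<otimes> inv x \<in> S"
proof -
  define E where "E = {S #> x | x. x \<in> K}"
  define Kg where "Kg = G\<lparr>carrier := K\<rparr>"
  have Kc: "K \<subseteq> carrier G" and Pc: "P \<subseteq> carrier G" and Sc: "S \<subseteq> carrier G"
    using K P S subgroup.subset by blast+
  have finK: "finite K" and finS: "finite S" using fin Kc Sc finite_subset by blast+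
  have "card (rcosets\<^bsub>Kg\<^esub> S) * card S = order Kg"
    unfolding Kg_def using group.lagrange subgroup_incl S K subgroup.subgroup_is_group is_group by blast
  moreover have "rcosets\<^bsub>Kg\<^esub> S = E" unfolding E_def RCOSETS_def Kg_def by auto
  ultimately have "card E * card S = card K" unfolding order_def Kg_def by simp
  moreover have "card S > 0" using finS subgroup.one_closed[OF S(1)] card_gt_0_iff by blast
  ultimately have cardE: "card E = card K div card S" by (metis nonzero_mult_div_cancel_right not_gr0)
  have finE: "finite E" unfolding E_def using finK by simp
  have act: "group_action (G\<lparr>carrier := P\<rparr>) E (\<lambda>h. \<lambda>A\<in>E. A #> inv h)"
    using rcoset_translation_action[OF K S(2) P(1,2) E_def] .
  have ordP: "order (G\<lparr>carrier := P\<rparr>) = p ^ n" using P(3) by (simp add: order_def)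
  have ndE: "\<not> p dvd card E" using nd cardE by simp
  obtain A where A: "A \<in> E" and fixA: "\<forall>h\<in>P. (\<lambda>A\<in>E. A #> inv h) A = A"
    using p_group_action_fixed_point[OF act finE p ordP ndE] by auto
  obtain x where x: "x \<in> K" "A = S #> x" using A unfolding E_def by blast
  have xc: "x \<in> carrier G" using x Kc by blast
  have "x \<otimes> y \<otimes> inv x \<in> S" if y: "y \<in> P" for y
  proof -
    have yc: "y \<in> carrier G" using y Pc by blast
    have iy: "inv y \<in> P" using y P(1) by (auto intro: subgroup.m_inv_closed)
    have "S #> x #> y = S #> x" using fixA[rule_format, OF iy] A x(2) yc by simp
    then have e: "S #> (x \<otimes> y) = S #> x" using Sc xc yc by (simp add: coset_mult_assoc)
    have "x \<otimes> y \<in> S #> (x \<otimes> y)" using rcos_self xc yc S(1) by blast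
    then have "x \<otimes> y \<in> S #> x" using e by simp
    then show "x \<otimes> y \<otimes> inv x \<in> S" using subgroup.rcos_module_imp[OF S(1) is_group xc] by blast
  qed
  then show ?thesis using x by blast
qed

end



section \<open>The subgroups \<open>H C\<^sub>G(H)\<close> and their Sylow subgroups \<open>H\<^sup>~\<close>\<close>

lemma is_tildeD:
  assumes "is_tilde G p H S"
  shows "subgroup S G" "S \<subseteq> H <#>\<^bsub>G\<^esub> centralizer G H" "\<exists>n. card S = p ^ n"
    "\<not> p dvd (card (H <#>\<^bsub>G\<^esub> centralizer G H) div card S)"
  using assms unfolding is_tilde_def sylow_of_def p_subgroup_def by auto

lemma subgroup_of_subgroup:
  assumes "group G" "subgroup K G" "subgroup S (G\<lparr>carrier := K\<rparr>)"
  shows "subgroup S G"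
proof -
  have SK: "S \<subseteq> K" using assms(3) subgroup.subset by fastforce
  show ?thesis
  proof (rule group.subgroupI[OF assms(1)])
    show "S \<subseteq> carrier G" using SK assms(2) subgroup.subset by blast
    show "S \<noteq> {}" using subgroup.one_closed[OF assms(3)] by blast
    fix a assume a: "a \<in> S"
    have "inv\<^bsub>G\<lparr>carrier := K\<rparr>\<^esub> a \<in> S" using subgroup.m_inv_closed[OF assms(3) a] .
    moreover have "inv\<^bsub>G\<lparr>carrier := K\<rparr>\<^esub> a = inv\<^bsub>G\<^esub> a"
      using group.m_inv_consistent[OF assms(1,2)] a SK by blast
    ultimately show "inv\<^bsub>G\<^esub> a \<in> S" by simp
  next
    fix a b assume "a \<in> S" "b \<in> S"
    then show "a \<otimes>\<^bsub>G\<^esub> b \<in> S" using subgroup.m_closed[OF assms(3)] by simp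
  qed
qed

lemma prime_power_cofactor_lt:
  fixes p :: nat
  assumes p: "Factorial_Ring.prime p" and e: "p ^ a * z = p ^ b * m" and m: "\<not> p dvd m" and z: "p dvd z"
  shows "a < b"
proof (rule ccontr)
  assume "\<not> a < b"
  then have ba: "b \<le> a" by simp
  have "p ^ b * m = p ^ b * (p ^ (a - b) * z)" using e ba
    by (metis (no_types, lifting) le_add_diff_inverse mult.assoc power_add)
  then have "m = p ^ (a - b) * z" using p prime_gt_0_nat by simp
  then have "p dvd m" using z by simp
  then show False using m by simp
qed

lemma prime_power_cofactor_dvd:
  fixes p :: nat
  assumes p: "Factorial_Ring.prime p" and e: "p ^ a * z = p ^ b * m" and ab: "a < b"
  shows "p dvd z"
proof -
  have "p ^ a * z = p ^ a * (p ^ (b - a) * m)" using e ab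
    by (metis (no_types, lifting) le_add_diff_inverse less_imp_le mult.assoc power_add)
  then have "z = p ^ (b - a) * m" using p prime_gt_0_nat by simp
  moreover have "p dvd p ^ (b - a)" using ab by (simp add: dvd_power)
  ultimately show ?thesis by simp
qed

lemma prime_power_factor_unique:
  fixes p :: nat
  assumes p: "Factorial_Ring.prime p" and e: "p ^ a * m1 = p ^ b * m2"
    and m1: "\<not> p dvd m1" and m2: "\<not> p dvd m2"
  shows "a = b"
proof (rule ccontr)
  assume "a \<noteq> b"
  then consider "a < b" | "b < a" by linarith
  then show False
  proof cases
    case 1 then show False using prime_power_cofactor_dvd[OF p e] m1 by blast
  next
    case 2 then show False using prime_power_cofactor_dvd[OF p e[symmetric]] m2 by blast
  qed
qed

context group begin

lemma subgroup_subset_mult_centralizer: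
  assumes "subgroup H G"
  shows "H \<subseteq> H <#> centralizer G H"
proof
  fix h assume h: "h \<in> H"
  have "\<one> \<in> centralizer G H"
    using subgroup.one_closed[OF centralizer_subgroup] assms subgroup.subset by blast
  moreover have "h = h \<otimes> \<one>" using h assms subgroup.mem_carrier by (metis r_one)
  ultimately show "h \<in> H <#> centralizer G H" by (rule set_mult_memI[OF h])
qed

lemma cz_formula:
  assumes fin: "finite (carrier G)" and H: "subgroup H G"
  shows "card (H <#> centralizer G H) = card H * cz_order G H"
proof -
  define C where "C = centralizer G H"
  have Hc: "H \<subseteq> carrier G" using H subgroup.subset by blast
  have C: "subgroup C G" unfolding C_def using centralizer_subgroup[OF Hc] .
  have D: "subgroup (H \<inter> C) G" using subgroups_Inter_pair[OF H C] .
  have DC: "subgroup (H \<inter> C) (G\<lparr>carrier := C\<rparr>)" using subgroup_incl[OF D C] by blast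
  have Cg: "group (G\<lparr>carrier := C\<rparr>)" using subgroup.subgroup_is_group[OF C is_group] .
  have "card (rcosets\<^bsub>G\<lparr>carrier := C\<rparr>\<^esub> (H \<inter> C)) * card (H \<inter> C) = order (G\<lparr>carrier := C\<rparr>)"
    using group.lagrange[OF Cg DC] .
  then have l: "cz_order G H * card (H \<inter> C) = card C"
    unfolding cz_order_def C_def[symmetric] by (simp add: order_def FactGroup_def)
  have finH: "finite H" using fin Hc finite_subset by blast
  have finC: "finite C" using fin C subgroup.subset finite_subset by blast
  have pf: "card (H <#> C) * card (H \<inter> C) = card H * card C"
    using product_formula[OF H C finH finC] .
  have pos: "card (H \<inter> C) > 0" using finH subgroup.one_closed[OF D] card_gt_0_iff by blast
  have "card (H <#> C) * card (H \<inter> C) = (card H * cz_order G H) * card (H \<inter> C)"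
    using pf l by (simp add: mult.assoc)
  then show ?thesis using pos unfolding C_def by simp
qed

lemma conj_in_HC:
  assumes H: "subgroup H G" and x: "x \<in> H <#> centralizer G H" and y: "y \<in> H"
  shows "x \<otimes> y \<otimes> inv x \<in> H"
proof -
  have Hc: "H \<subseteq> carrier G" using H subgroup.subset by blast
  obtain h c where h: "h \<in> H" and c: "c \<in> centralizer G H" and xe: "x = h \<otimes> c"
    using x by (rule set_mult_memE)
  have hc: "h \<in> carrier G" and cc: "c \<in> carrier G" and yc: "y \<in> carrier G"
    using h c y Hc unfolding centralizer_def by blast+
  have cy: "c \<otimes> y = y \<otimes> c" using c y unfolding centralizer_def by blast
  have "x \<otimes> y \<otimes> inv x = h \<otimes> (c \<otimes> y) \<otimes> inv c \<otimes> inv h"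
    using hc cc yc xe by (simp add: m_assoc inv_mult_group)
  also have "\<dots> = h \<otimes> y \<otimes> inv h" using cy hc cc yc by (simp add: m_assoc)
  finally show ?thesis using h y H by (simp add: subgroup.m_closed subgroup.m_inv_closed)
qed

lemma tilde_exists:
  assumes fin: "finite (carrier G)" and p: "Factorial_Ring.prime (p::nat)" and H: "subgroup H G"
  shows "\<exists>S. is_tilde G p H S"
proof -
  define K where "K = H <#> centralizer G H"
  have K: "subgroup K G" unfolding K_def using centralizer_mult_subgroup[OF H] .
  have Kg: "group (G\<lparr>carrier := K\<rparr>)" using subgroup.subgroup_is_group[OF K is_group] .
  have finK: "finite K" using fin K subgroup.subset finite_subset by blast
  have "card K \<noteq> 0" using finK subgroup.one_closed[OF K] by (metis card_0_eq empty_iff)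
  moreover have "\<not> is_unit p" using p not_prime_unit by blast
  ultimately obtain m where m0: "card K = p ^ multiplicity p (card K) * m" "\<not> p dvd m"
    using multiplicity_decompose' by metis
  define a where "a = multiplicity p (card K)"
  have m: "card K = p ^ a * m" "\<not> p dvd m" using m0 unfolding a_def by auto
  have "\<exists>S. subgroup S (G\<lparr>carrier := K\<rparr>) \<and> card S = p ^ a"
    by (rule sylow_thm[where a=a and m=m, OF p Kg]) (use m finK in \<open>simp_all add: order_def\<close>)
  then obtain S where S: "subgroup S (G\<lparr>carrier := K\<rparr>)" "card S = p ^ a" by blast
  have SG: "subgroup S G" using subgroup_of_subgroup[OF is_group K S(1)] .
  have SK: "S \<subseteq> K" using S(1) subgroup.subset by fastforce
  have pos: "p ^ a > 0" using p prime_gt_0_nat by simp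
  have "card K div card S = m" using m(1) S(2) pos by simp
  then show ?thesis unfolding is_tilde_def sylow_of_def p_subgroup_def K_def[symmetric]
    using SG SK S(2) m(2) by blast
qed

text \<open>A \<open>p\<close>-subgroup \<open>H\<close> lies in every \<open>H\<^sup>~\<close>: it is conjugate into \<open>H\<^sup>~\<close> by an element of
  \<open>H C\<^sub>G(H)\<close>, which normalizes \<open>H\<close>.\<close>
lemma tilde_contains:
  assumes fin: "finite (carrier G)" and p: "Factorial_Ring.prime (p::nat)"
    and H: "p_subgroup G p H" and S: "is_tilde G p H S"
  shows "H \<subseteq> S"
proof -
  define K where "K = H <#> centralizer G H"
  have Hs: "subgroup H G" using H unfolding p_subgroup_def by blast
  obtain n where n: "card H = p ^ n" using H unfolding p_subgroup_def by blast
  have K: "subgroup K G" unfolding K_def using centralizer_mult_subgroup[OF Hs] .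
  have SG: "subgroup S G" and SK: "S \<subseteq> K" and nd: "\<not> p dvd (card K div card S)"
    using is_tildeD[OF S] by (simp_all add: K_def)
  have HK: "H \<subseteq> K" unfolding K_def using subgroup_subset_mult_centralizer[OF Hs] .
  obtain x where x: "x \<in> K" and cj: "\<forall>y\<in>H. x \<otimes> y \<otimes> inv x \<in> S"
    using sylow_conj[OF fin p K SG SK nd Hs HK n] by blast
  show ?thesis
  proof
    fix y assume y: "y \<in> H"
    have xc: "x \<in> carrier G" using subgroup.mem_carrier[OF K x] .
    have yc: "y \<in> carrier G" using subgroup.mem_carrier[OF Hs y] .
    have ix: "inv x \<in> K" using subgroup.m_inv_closed[OF K x] .
    have "inv x \<otimes> y \<otimes> inv (inv x) \<in> H" using conj_in_HC[OF Hs ix[unfolded K_def] y] .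
    then have z: "inv x \<otimes> y \<otimes> x \<in> H" using xc by simp
    have "x \<otimes> (inv x \<otimes> y \<otimes> x) \<otimes> inv x \<in> S" using cj z by blast
    moreover have "x \<otimes> (inv x \<otimes> y \<otimes> x) \<otimes> inv x = y" using xc yc by (simp add: m_assoc)
    ultimately show "y \<in> S" by simp
  qed
qed

text \<open>\<open>H\<^sup>~\<close> is \<open>p\<close>-centric: \<open>H\<^sup>~ C\<^sub>G(H\<^sup>~)\<close> lies in \<open>H C\<^sub>G(H)\<close>, in which \<open>H\<^sup>~\<close> has
  index prime to \<open>p\<close>.\<close>
lemma tilde_centric:
  assumes fin: "finite (carrier G)" and p: "Factorial_Ring.prime (p::nat)"
    and H: "p_subgroup G p H" and S: "is_tilde G p H S"
  shows "\<not> p dvd cz_order G S"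
proof
  assume pd: "p dvd cz_order G S"
  define K where "K = H <#> centralizer G H"
  have Hs: "subgroup H G" using H unfolding p_subgroup_def by blast
  have K: "subgroup K G" unfolding K_def using centralizer_mult_subgroup[OF Hs] .
  have SG: "subgroup S G" and SK: "S \<subseteq> K" and nd: "\<not> p dvd (card K div card S)"
    using is_tildeD[OF S] by (simp_all add: K_def)
  have HS: "H \<subseteq> S" using tilde_contains[OF fin p H S] .
  have Sc: "S \<subseteq> carrier G" using SG subgroup.subset by auto
  define SC where "SC = S <#> centralizer G S"
  have SCg: "subgroup SC G" unfolding SC_def using centralizer_mult_subgroup[OF SG] .
  have one_cH: "\<one> \<in> H" using subgroup.one_closed[OF Hs] .
  have SCK: "SC \<subseteq> K"
  proof
    fix z assume "z \<in> SC"
    then obtain s c where s: "s \<in> S" and c: "c \<in> centralizer G S" and z: "z = s \<otimes> c"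
      unfolding SC_def by (rule set_mult_memE)
    have cc: "c \<in> carrier G" using c unfolding centralizer_def by blast
    have "c \<in> centralizer G H" using c HS unfolding centralizer_def by blast
    moreover have "c = \<one> \<otimes> c" using cc by simp
    ultimately have cK: "c \<in> K" unfolding K_def by (rule set_mult_memI[OF one_cH])
    have sK: "s \<in> K" using s SK by blast
    show "z \<in> K" using z subgroup.m_closed[OF K sK cK] by simp
  qed
  have c1: "card SC = card S * cz_order G S" unfolding SC_def using cz_formula[OF fin SG] .
  have d1: "card SC dvd card K" using subgroup_card_dvd[OF fin SCg K SCK] .
  have d2: "card S dvd card K" using subgroup_card_dvd[OF fin SG K SK] .
  have finS: "finite S" using fin Sc finite_subset by blast
  have pos: "card S > 0" using finS subgroup.one_closed[OF SG] card_gt_0_iff by blast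
  have "card K = card S * (card K div card S)" using d2 by simp
  then have "card S * cz_order G S dvd card S * (card K div card S)" using d1 c1 by metis
  then have "cz_order G S dvd card K div card S" using pos by simp
  then have "p dvd card K div card S" using pd dvd_trans by blast
  then show False using nd by simp
qed

lemma tilde_equation:
  assumes fin: "finite (carrier G)" and H: "subgroup H G" and S: "is_tilde G p H S"
  shows "card H * cz_order G H = card S * (card (H <#> centralizer G H) div card S)"
proof -
  define K where "K = H <#> centralizer G H"
  have K: "subgroup K G" unfolding K_def using centralizer_mult_subgroup[OF H] .
  have SG: "subgroup S G" and SK: "S \<subseteq> K" using is_tildeD[OF S] by (simp_all add: K_def)
  have "card S dvd card K" using subgroup_card_dvd[OF fin SG K SK] .
  then have "card K = card S * (card K div card S)" by simp
  then show ?thesis using cz_formula[OF fin H] unfolding K_def by simp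
qed

lemma arising_lt:
  assumes fin: "finite (carrier G)" and p: "Factorial_Ring.prime (p::nat)"
    and A: "arising G p H" and S: "is_tilde G p H S"
  shows "card H < card S"
proof -
  have H: "subgroup H G" and a: "\<exists>a. card H = p ^ a" and pd: "p dvd cz_order G H"
    using A unfolding arising_def p_subgroup_def by blast+
  obtain a where a: "card H = p ^ a" using a by blast
  obtain b where b: "card S = p ^ b" using is_tildeD(3)[OF S] by blast
  have "a < b"
    using prime_power_cofactor_lt[OF p _ is_tildeD(4)[OF S] pd] tilde_equation[OF fin H S] a b by metis
  then show ?thesis using a b p prime_gt_1_nat power_strict_increasing_iff by metis
qed

lemma lt_arising:
  assumes fin: "finite (carrier G)" and p: "Factorial_Ring.prime (p::nat)"
    and H: "p_subgroup G p H" and S: "is_tilde G p H S" and lt: "card H < card S"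
  shows "p dvd cz_order G H"
proof -
  have Hs: "subgroup H G" and a: "\<exists>a. card H = p ^ a" using H unfolding p_subgroup_def by blast+
  obtain a where a: "card H = p ^ a" using a by blast
  obtain b where b: "card S = p ^ b" using is_tildeD(3)[OF S] by blast
  have "a < b" using lt a b p prime_gt_1_nat power_strict_increasing_iff by metis
  then show ?thesis using prime_power_cofactor_dvd[OF p _ \<open>a < b\<close>] tilde_equation[OF fin Hs S] a b by metis
qed

lemma conj_iso:
  assumes g: "g \<in> carrier G"
  shows "(\<lambda>x. g \<otimes> x \<otimes> inv g) \<in> iso G G"
proof (rule isoI)
  show "(\<lambda>x. g \<otimes> x \<otimes> inv g) \<in> hom G G"
  proof (rule homI)
    fix x assume "x \<in> carrier G" then show "g \<otimes> x \<otimes> inv g \<in> carrier G" using g by simp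
  next
    fix x y assume "x \<in> carrier G" "y \<in> carrier G"
    then show "g \<otimes> (x \<otimes> y) \<otimes> inv g = g \<otimes> x \<otimes> inv g \<otimes> (g \<otimes> y \<otimes> inv g)"
      using g by (simp add: m_assoc)
  qed
  show "bij_betw (\<lambda>x. g \<otimes> x \<otimes> inv g) (carrier G) (carrier G)"
  proof (rule bij_betw_byWitness[where f' = "\<lambda>y. inv g \<otimes> y \<otimes> g"])
    show "\<forall>a\<in>carrier G. inv g \<otimes> (g \<otimes> a \<otimes> inv g) \<otimes> g = a" using g by (simp add: m_assoc)
    show "\<forall>a\<in>carrier G. g \<otimes> (inv g \<otimes> a \<otimes> g) \<otimes> inv g = a" using g by (simp add: m_assoc)
    show "(\<lambda>x. g \<otimes> x \<otimes> inv g) ` carrier G \<subseteq> carrier G" using g by auto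
    show "(\<lambda>y. inv g \<otimes> y \<otimes> g) ` carrier G \<subseteq> carrier G" using g by auto
  qed
qed

lemma cent_conj_fix:
  assumes "c \<in> centralizer G P" "y \<in> P" "P \<subseteq> carrier G"
  shows "c \<otimes> y \<otimes> inv c = y"
proof -
  have cc: "c \<in> carrier G" using assms(1) unfolding centralizer_def by blast
  have yc: "y \<in> carrier G" using assms(2,3) by blast
  have "c \<otimes> y = y \<otimes> c" using assms(1,2) unfolding centralizer_def by blast
  then have "c \<otimes> y \<otimes> inv c = y \<otimes> c \<otimes> inv c" by simp
  also have "\<dots> = y" using cc yc by (simp add: m_assoc)
  finally show ?thesis .
qed

lemma conj_img_fix:
  assumes "c \<in> centralizer G P" "P \<subseteq> carrier G"
  shows "(\<lambda>y. c \<otimes> y \<otimes> inv c) ` P = P"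
proof -
  have "(\<lambda>y. c \<otimes> y \<otimes> inv c) ` P = (\<lambda>y. y) ` P"
    using cent_conj_fix[OF assms(1) _ assms(2)] by (intro image_cong) auto
  then show ?thesis by simp
qed

end


lemma pair_equiv_trans:
  assumes "pair_equiv A P B Q" "pair_equiv B Q C R"
  shows "pair_equiv A P C R"
proof -
  obtain s where s: "s \<in> iso A B" "s ` P = Q" using assms(1) unfolding pair_equiv_def by blast
  obtain t where t: "t \<in> iso B C" "t ` Q = R" using assms(2) unfolding pair_equiv_def by blast
  have "t \<circ> s \<in> iso A C" using iso_set_trans[OF s(1) t(1)] .
  moreover have "(t \<circ> s) ` P = t ` (s ` P)" by (simp add: image_image)
  then have "(t \<circ> s) ` P = R" using s(2) t(2) by simp
  ultimately show ?thesis unfolding pair_equiv_def by blast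
qed

lemma pair_equiv_sym:
  assumes "group A" "P \<subseteq> carrier A" "pair_equiv A P B Q"
  shows "pair_equiv B Q A P"
proof -
  obtain s where s: "s \<in> iso A B" "s ` P = Q" using assms(3) unfolding pair_equiv_def by blast
  have isoBA: "inv_into (carrier A) s \<in> iso B A" using group.iso_set_sym[OF assms(1) s(1)] .
  have inj: "inj_on s (carrier A)" using s(1) unfolding iso_def bij_betw_def by blast
  moreover have "inv_into (carrier A) s ` Q = P"
    using inv_into_image_cancel[OF inj assms(2)] s(2) by simp
  ultimately show ?thesis using isoBA unfolding pair_equiv_def by blast
qed

lemma pair_equiv_iso: "f \<in> iso T1 T2 \<Longrightarrow> pair_equiv T1 P T2 (f ` P)"
  unfolding pair_equiv_def by blast


section \<open>Transport along a group isomorphism\<close>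

text \<open>All notions above (centralizers, \<open>|C\<^sub>G(H)/Z(H)|\<close>, the groups \<open>H\<^sup>~\<close>) are carried
  along an isomorphism \<open>f : G \<cong> G'\<close>; conjugations are the special case \<open>G' = G\<close>.\<close>
locale giso = G: group G + G': group G' for G (structure) and G' (structure) +
  fixes f assumes f_iso: "f \<in> iso G G'"
begin

lemma f_hom: "f \<in> hom G G'" using f_iso by (simp add: iso_def)
lemma f_inj: "inj_on f (carrier G)" using f_iso by (simp add: iso_def bij_betw_def)
lemma f_surj: "f ` carrier G = carrier G'" using f_iso by (simp add: iso_def bij_betw_def)
lemma f_mult: "x \<in> carrier G \<Longrightarrow> y \<in> carrier G \<Longrightarrow> f (x \<otimes>\<^bsub>G\<^esub> y) = f x \<otimes>\<^bsub>G'\<^esub> f y"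
  using f_hom by (simp add: hom_def)
lemma f_carrier: "x \<in> carrier G \<Longrightarrow> f x \<in> carrier G'"
  using f_hom by (simp add: hom_def Pi_def)

lemma f_cent:
  assumes Hc: "H \<subseteq> carrier G"
  shows "f ` centralizer G H = centralizer G' (f ` H)"
proof
  show "f ` centralizer G H \<subseteq> centralizer G' (f ` H)"
  proof
    fix z assume "z \<in> f ` centralizer G H"
    then obtain c where c: "c \<in> centralizer G H" and z: "z = f c" by blast
    have cc: "c \<in> carrier G" using c unfolding centralizer_def by blast
    have "\<forall>y\<in>f ` H. f c \<otimes>\<^bsub>G'\<^esub> y = y \<otimes>\<^bsub>G'\<^esub> f c"
    proof
      fix y assume "y \<in> f ` H"
      then obtain h where h: "h \<in> H" and y: "y = f h" by blast
      have hc: "h \<in> carrier G" using h Hc by blast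
      have "c \<otimes>\<^bsub>G\<^esub> h = h \<otimes>\<^bsub>G\<^esub> c" using c h unfolding centralizer_def by blast
      then show "f c \<otimes>\<^bsub>G'\<^esub> y = y \<otimes>\<^bsub>G'\<^esub> f c" using f_mult[OF cc hc] f_mult[OF hc cc] y by simp
    qed
    then show "z \<in> centralizer G' (f ` H)" unfolding centralizer_def using z f_carrier[OF cc] by blast
  qed
next
  show "centralizer G' (f ` H) \<subseteq> f ` centralizer G H"
  proof
    fix z assume z: "z \<in> centralizer G' (f ` H)"
    then have "z \<in> carrier G'" unfolding centralizer_def by blast
    then obtain c where cc: "c \<in> carrier G" and zc: "z = f c" using f_surj by blast
    have "\<forall>h\<in>H. c \<otimes>\<^bsub>G\<^esub> h = h \<otimes>\<^bsub>G\<^esub> c"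
    proof
      fix h assume h: "h \<in> H"
      have hc: "h \<in> carrier G" using h Hc by blast
      have "z \<otimes>\<^bsub>G'\<^esub> f h = f h \<otimes>\<^bsub>G'\<^esub> z" using z h unfolding centralizer_def by blast
      then have "f (c \<otimes>\<^bsub>G\<^esub> h) = f (h \<otimes>\<^bsub>G\<^esub> c)" using f_mult[OF cc hc] f_mult[OF hc cc] zc by simp
      then show "c \<otimes>\<^bsub>G\<^esub> h = h \<otimes>\<^bsub>G\<^esub> c" using f_inj cc hc inj_onD by (metis G.m_closed)
    qed
    then have "c \<in> centralizer G H" unfolding centralizer_def using cc by blast
    then show "z \<in> f ` centralizer G H" using zc by blast
  qed
qed

lemma f_setmult:
  assumes "A \<subseteq> carrier G" "B \<subseteq> carrier G"
  shows "f ` (A <#>\<^bsub>G\<^esub> B) = f ` A <#>\<^bsub>G'\<^esub> f ` B"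
proof
  show "f ` (A <#>\<^bsub>G\<^esub> B) \<subseteq> f ` A <#>\<^bsub>G'\<^esub> f ` B"
  proof
    fix z assume "z \<in> f ` (A <#>\<^bsub>G\<^esub> B)"
    then obtain x where x: "x \<in> A <#>\<^bsub>G\<^esub> B" and z: "z = f x" by blast
    obtain a b where a: "a \<in> A" and b: "b \<in> B" and xe: "x = a \<otimes>\<^bsub>G\<^esub> b"
      using x by (rule set_mult_memE)
    have "z = f a \<otimes>\<^bsub>G'\<^esub> f b" using z xe f_mult a b assms by blast
    then show "z \<in> f ` A <#>\<^bsub>G'\<^esub> f ` B" using a b by (intro set_mult_memI) auto
  qed
next
  show "f ` A <#>\<^bsub>G'\<^esub> f ` B \<subseteq> f ` (A <#>\<^bsub>G\<^esub> B)"
  proof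
    fix z assume "z \<in> f ` A <#>\<^bsub>G'\<^esub> f ` B"
    then obtain a' b' where a: "a' \<in> f ` A" and b: "b' \<in> f ` B" and ze: "z = a' \<otimes>\<^bsub>G'\<^esub> b'"
      by (rule set_mult_memE)
    obtain a b where "a \<in> A" "b \<in> B" "a' = f a" "b' = f b" using a b by blast
    moreover have "a \<otimes>\<^bsub>G\<^esub> b \<in> A <#>\<^bsub>G\<^esub> B" using \<open>a \<in> A\<close> \<open>b \<in> B\<close> by (intro set_mult_memI) auto
    ultimately show "z \<in> f ` (A <#>\<^bsub>G\<^esub> B)" using ze f_mult assms by (metis image_eqI subsetD)
  qed
qed

lemma f_card: "A \<subseteq> carrier G \<Longrightarrow> card (f ` A) = card A"
  using f_inj by (meson card_image inj_on_subset)

lemma f_subgroup: "subgroup H G \<Longrightarrow> subgroup (f ` H) G'"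
  using subgroup.iso_subgroup G.is_group G'.is_group f_iso by blast

lemma f_cz:
  assumes fin: "finite (carrier G)" and H: "subgroup H G"
  shows "cz_order G' (f ` H) = cz_order G H"
proof -
  have Hc: "H \<subseteq> carrier G" using H subgroup.subset by blast
  have Cc: "centralizer G H \<subseteq> carrier G" unfolding centralizer_def by blast
  have fin': "finite (carrier G')" using fin f_surj by (metis finite_imageI)
  have "card (f ` H <#>\<^bsub>G'\<^esub> centralizer G' (f ` H)) = card (f ` H) * cz_order G' (f ` H)"
    using G'.cz_formula[OF fin' f_subgroup[OF H]] .
  moreover have "f ` H <#>\<^bsub>G'\<^esub> centralizer G' (f ` H) = f ` (H <#>\<^bsub>G\<^esub> centralizer G H)"
    using f_setmult[OF Hc Cc] f_cent[OF Hc] by simp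
  moreover have "card (f ` (H <#>\<^bsub>G\<^esub> centralizer G H)) = card (H <#>\<^bsub>G\<^esub> centralizer G H)"
    by (rule f_card) (use G.setmult_subset_G Hc Cc in blast)
  moreover have "card (H <#>\<^bsub>G\<^esub> centralizer G H) = card H * cz_order G H"
    using G.cz_formula[OF fin H] .
  moreover have "card (f ` H) = card H" using f_card[OF Hc] .
  moreover have "card H > 0" using fin Hc finite_subset subgroup.one_closed[OF H] card_gt_0_iff by blast
  ultimately show ?thesis by simp
qed

lemma f_tilde:
  assumes H: "subgroup H G" and S: "is_tilde G p H S"
  shows "is_tilde G' p (f ` H) (f ` S)"
proof -
  define K where "K = H <#>\<^bsub>G\<^esub> centralizer G H"
  have Hc: "H \<subseteq> carrier G" using H subgroup.subset by blast
  have Cc: "centralizer G H \<subseteq> carrier G" unfolding centralizer_def by blast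
  have Kc: "K \<subseteq> carrier G" unfolding K_def using G.setmult_subset_G Hc Cc by blast
  have SG: "subgroup S G" and SK: "S \<subseteq> K" and cs: "\<exists>n. card S = p ^ n"
    and nd: "\<not> p dvd (card K div card S)" using is_tildeD[OF S] by (simp_all add: K_def)
  have Sc: "S \<subseteq> carrier G" using SG subgroup.subset by blast
  have fK: "f ` K = f ` H <#>\<^bsub>G'\<^esub> centralizer G' (f ` H)"
    unfolding K_def using f_setmult[OF Hc Cc] f_cent[OF Hc] by simp
  have "sylow_of G' p (f ` K) (f ` S)"
    unfolding sylow_of_def p_subgroup_def
    using f_subgroup[OF SG] f_card[OF Sc] f_card[OF Kc] cs nd SK by auto
  then show ?thesis unfolding is_tilde_def fK[symmetric] .
qed

lemma f_restrict_iso: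
  assumes "S \<subseteq> carrier G"
  shows "f \<in> iso (G\<lparr>carrier := S\<rparr>) (G'\<lparr>carrier := f ` S\<rparr>)"
proof (rule isoI)
  show "f \<in> hom (G\<lparr>carrier := S\<rparr>) (G'\<lparr>carrier := f ` S\<rparr>)"
    using f_mult assms by (intro homI) auto
  show "bij_betw f (carrier (G\<lparr>carrier := S\<rparr>)) (carrier (G'\<lparr>carrier := f ` S\<rparr>))"
    using f_inj assms by (simp add: bij_betw_def inj_on_subset)
qed

end

lemma giso_conj:
  assumes "group G" "g \<in> carrier G"
  shows "giso G G (\<lambda>x. g \<otimes>\<^bsub>G\<^esub> x \<otimes>\<^bsub>G\<^esub> inv\<^bsub>G\<^esub> g)"
  by (intro giso.intro giso_axioms.intro assms(1) group.conj_iso[OF assms])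

text \<open>Two choices of \<open>P\<^sup>~\<close> are conjugate by an element of \<open>C\<^sub>G(P)\<close>: by Sylow they are
  conjugate by some \<open>h c\<close> with \<open>h \<in> P \<subseteq> P\<^sup>~\<close> and \<open>c \<in> C\<^sub>G(P)\<close>, and \<open>h\<close> may be dropped.\<close>
lemma (in group) tildes_conj:
  assumes fin: "finite (carrier G)" and p: "Factorial_Ring.prime (p::nat)"
    and P: "p_subgroup G p P" and T1: "is_tilde G p P T1" and T2: "is_tilde G p P T2"
  shows "\<exists>c\<in>centralizer G P. (\<lambda>y. c \<otimes> y \<otimes> inv c) ` T1 = T2"
proof -
  have Ps: "subgroup P G" using P unfolding p_subgroup_def by blast
  have Pc: "P \<subseteq> carrier G" using Ps subgroup.subset by blast
  define K0 where "K0 = P <#> centralizer G P"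
  have K0: "subgroup K0 G" unfolding K0_def using centralizer_mult_subgroup[OF Ps] .
  have T1s: "subgroup T1 G" and T1K: "T1 \<subseteq> K0" and nd1: "\<not> p dvd (card K0 div card T1)"
    using is_tildeD[OF T1] by (simp_all add: K0_def)
  have T2s: "subgroup T2 G" and T2K: "T2 \<subseteq> K0" and nd2: "\<not> p dvd (card K0 div card T2)"
    using is_tildeD[OF T2] by (simp_all add: K0_def)
  obtain a where a: "card T1 = p ^ a" using is_tildeD(3)[OF T1] by blast
  obtain b where b: "card T2 = p ^ b" using is_tildeD(3)[OF T2] by blast
  have "card K0 = p ^ a * (card K0 div card T1)"
    using subgroup_card_dvd[OF fin T1s K0 T1K] a by simp
  moreover have "card K0 = p ^ b * (card K0 div card T2)"
    using subgroup_card_dvd[OF fin T2s K0 T2K] b by simp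
  ultimately have "a = b" using prime_power_factor_unique[OF p _ nd1 nd2] by metis
  then have cardeq: "card T1 = card T2" using a b by simp
  obtain x where x: "x \<in> K0" and cj: "\<forall>y\<in>T1. x \<otimes> y \<otimes> inv x \<in> T2"
    using sylow_conj[OF fin p K0 T2s T2K nd2 T1s T1K a] by blast
  obtain h c where h: "h \<in> P" and c: "c \<in> centralizer G P" and xe: "x = h \<otimes> c"
    using x unfolding K0_def by (rule set_mult_memE)
  have hc: "h \<in> carrier G" using h Pc by blast
  have cc: "c \<in> carrier G" using c unfolding centralizer_def by blast
  have hT2: "h \<in> T2" using h tilde_contains[OF fin p P T2] by blast
  have sub: "(\<lambda>y. c \<otimes> y \<otimes> inv c) ` T1 \<subseteq> T2"
  proof
    fix z assume "z \<in> (\<lambda>y. c \<otimes> y \<otimes> inv c) ` T1"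
    then obtain y where y: "y \<in> T1" and z: "z = c \<otimes> y \<otimes> inv c" by blast
    have yc: "y \<in> carrier G" using subgroup.mem_carrier[OF T1s y] .
    have "inv h \<otimes> (x \<otimes> y \<otimes> inv x) \<otimes> h = z"
      using z xe hc cc yc by (simp add: m_assoc inv_mult_group)
    moreover have "inv h \<otimes> (x \<otimes> y \<otimes> inv x) \<otimes> h \<in> T2"
      using cj y hT2 T2s by (simp add: subgroup.m_closed subgroup.m_inv_closed)
    ultimately show "z \<in> T2" by simp
  qed
  interpret C: giso G G "\<lambda>y. c \<otimes> y \<otimes> inv c" using giso_conj[OF is_group cc] .
  have T1c: "T1 \<subseteq> carrier G" using T1s subgroup.subset by blast
  have "card ((\<lambda>y. c \<otimes> y \<otimes> inv c) ` T1) = card T2" using C.f_card[OF T1c] cardeq by simp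
  moreover have "finite T2" using fin T2s subgroup.subset finite_subset by blast
  ultimately have "(\<lambda>y. c \<otimes> y \<otimes> inv c) ` T1 = T2" using sub card_subset_eq by blast
  then show ?thesis using c by blast
qed



lemma quot_eq_class: "equiv A r \<Longrightarrow> XX \<in> A//r \<Longrightarrow> x \<in> XX \<Longrightarrow> XX = r``{x}"
  by (metis Image_singleton_iff equiv_class_eq quotientE)

lemma quot_rel: "equiv A r \<Longrightarrow> XX \<in> A//r \<Longrightarrow> x \<in> XX \<Longrightarrow> y \<in> XX \<Longrightarrow> (x, y) \<in> r"
  by (metis quotient_eq_iff)

lemma quot_nonempty: "equiv A r \<Longrightarrow> XX \<in> A//r \<Longrightarrow> \<exists>x. x \<in> XX"
  by (metis equiv_class_self quotientE)

lemma quot_sub: "equiv A r \<Longrightarrow> XX \<in> A//r \<Longrightarrow> XX \<subseteq> A"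
  using Union_quotient by blast

lemma quot_closed: "equiv A r \<Longrightarrow> XX \<in> A//r \<Longrightarrow> x \<in> XX \<Longrightarrow> (x, y) \<in> r \<Longrightarrow> y \<in> XX"
  by (metis Image_singleton_iff quot_eq_class)

lemma quot_some: "equiv A r \<Longrightarrow> XX \<in> A//r \<Longrightarrow> (SOME x. x \<in> XX) \<in> XX"
  using quot_nonempty by (metis someI_ex)


section \<open>Injective homomorphisms up to conjugacy\<close>

lemma inj_hom_cong:
  assumes "group Q" "\<alpha> \<in> inj_hom Q G" "\<And>x. x \<in> carrier Q \<Longrightarrow> \<beta> x = \<alpha> x"
  shows "\<beta> \<in> inj_hom Q G"
proof -
  have "\<beta> \<in> hom Q G" using assms(2,3) group.hom_eq[OF assms(1)] unfolding inj_hom_def by blast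
  moreover have "inj_on \<beta> (carrier Q)" using assms(2,3) unfolding inj_hom_def inj_on_def by auto
  ultimately show ?thesis unfolding inj_hom_def by blast
qed

lemma inj_hom_carrier: "\<alpha> \<in> inj_hom Q G \<Longrightarrow> x \<in> carrier Q \<Longrightarrow> \<alpha> x \<in> carrier G"
proof -
  assume a: "\<alpha> \<in> inj_hom Q G" and x: "x \<in> carrier Q"
  have "\<alpha> \<in> hom Q G" using a unfolding inj_hom_def by blast
  then show ?thesis using x by (simp add: hom_def Pi_def)
qed

lemma inj_hom_mult: "\<alpha> \<in> inj_hom Q G \<Longrightarrow> x \<in> carrier Q \<Longrightarrow> y \<in> carrier Q \<Longrightarrow> \<alpha> (x \<otimes>\<^bsub>Q\<^esub> y) = \<alpha> x \<otimes>\<^bsub>G\<^esub> \<alpha> y"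
  unfolding inj_hom_def hom_def by blast

lemma inj_hom_inj: "\<alpha> \<in> inj_hom Q G \<Longrightarrow> inj_on \<alpha> (carrier Q)"
  unfolding inj_hom_def by blast

lemma inj_hom_comp:
  assumes "\<gamma> \<in> inj_hom Q T" "\<delta> \<in> inj_hom T G"
  shows "(\<lambda>q. \<delta> (\<gamma> q)) \<in> inj_hom Q G"
proof -
  have "\<delta> \<circ> \<gamma> \<in> hom Q G" using assms hom_compose unfolding inj_hom_def by blast
  moreover have "inj_on (\<delta> \<circ> \<gamma>) (carrier Q)"
  proof (rule comp_inj_on)
    show "inj_on \<gamma> (carrier Q)" using inj_hom_inj[OF assms(1)] .
    have "\<gamma> ` carrier Q \<subseteq> carrier T" using inj_hom_carrier[OF assms(1)] by blast
    then show "inj_on \<delta> (\<gamma> ` carrier Q)" using inj_hom_inj[OF assms(2)] inj_on_subset by blast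
  qed
  ultimately show ?thesis unfolding inj_hom_def comp_def by simp
qed

lemma iso_inj_hom: "a \<in> iso A B \<Longrightarrow> a \<in> inj_hom A B"
  unfolding iso_def inj_hom_def bij_betw_def by blast

lemma inj_hom_iso_img:
  assumes "\<delta> \<in> inj_hom T G"
  shows "\<delta> \<in> iso T (G\<lparr>carrier := \<delta> ` carrier T\<rparr>)"
proof (rule isoI)
  show "\<delta> \<in> hom T (G\<lparr>carrier := \<delta> ` carrier T\<rparr>)"
    using inj_hom_mult[OF assms] by (intro homI) auto
  show "bij_betw \<delta> (carrier T) (carrier (G\<lparr>carrier := \<delta> ` carrier T\<rparr>))"
    using inj_hom_inj[OF assms] by (simp add: bij_betw_def)
qed

lemma iso_subgroup_inv_inj_hom:
  assumes grpS: "group (G\<lparr>carrier := S\<rparr>)" and Sc: "S \<subseteq> carrier G" and s: "s \<in> iso (G\<lparr>carrier := S\<rparr>) T"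
  shows "inv_into S s \<in> inj_hom T G" and "inv_into S s ` carrier T = S"
proof -
  have diso: "inv_into S s \<in> iso T (G\<lparr>carrier := S\<rparr>)"
    using group.iso_set_sym[OF grpS s] by simp
  then have "inv_into S s \<in> hom T G" using Sc unfolding iso_def hom_def by auto
  moreover have "inj_on (inv_into S s) (carrier T)" using diso unfolding iso_def bij_betw_def by simp
  ultimately show "inv_into S s \<in> inj_hom T G" unfolding inj_hom_def by blast
  show "inv_into S s ` carrier T = S" using diso unfolding iso_def bij_betw_def by simp
qed

lemma iso_comp_inj_hom:
  assumes grpQ: "group Q" and a: "\<alpha> \<in> inj_hom Q G" and aS: "\<alpha> ` carrier Q \<subseteq> S"
    and s: "s \<in> iso (G\<lparr>carrier := S\<rparr>) T"
  shows "(\<lambda>q\<in>carrier Q. s (\<alpha> q)) \<in> inj_hom Q T"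
proof -
  let ?\<gamma> = "\<lambda>q\<in>carrier Q. s (\<alpha> q)"
  have s_hom: "s \<in> hom (G\<lparr>carrier := S\<rparr>) T" and s_bij: "bij_betw s S (carrier T)"
    using s unfolding iso_def by auto
  have s_inj: "inj_on s S" using s_bij unfolding bij_betw_def by blast
  have s_mult: "s (x \<otimes>\<^bsub>G\<^esub> y) = s x \<otimes>\<^bsub>T\<^esub> s y" if "x \<in> S" "y \<in> S" for x y
    using s_hom that unfolding hom_def by simp
  have aH: "\<alpha> q \<in> S" if "q \<in> carrier Q" for q using that aS by blast
  have "?\<gamma> \<in> hom Q T"
  proof (rule homI)
    fix q assume q: "q \<in> carrier Q"
    show "?\<gamma> q \<in> carrier T" using bij_betwE[OF s_bij] aH[OF q] q by simp
  next
    fix x y assume xy: "x \<in> carrier Q" "y \<in> carrier Q"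
    have "x \<otimes>\<^bsub>Q\<^esub> y \<in> carrier Q" by (rule monoid.m_closed[OF group.is_monoid[OF grpQ] xy])
    then show "?\<gamma> (x \<otimes>\<^bsub>Q\<^esub> y) = ?\<gamma> x \<otimes>\<^bsub>T\<^esub> ?\<gamma> y"
      using xy inj_hom_mult[OF a xy] s_mult[OF aH aH] by simp
  qed
  moreover have "inj_on ?\<gamma> (carrier Q)"
  proof (rule inj_onI)
    fix x y assume xy: "x \<in> carrier Q" "y \<in> carrier Q" "?\<gamma> x = ?\<gamma> y"
    then have "s (\<alpha> x) = s (\<alpha> y)" by simp
    then have "\<alpha> x = \<alpha> y" using s_inj aH xy inj_onD by metis
    then show "x = y" using inj_hom_inj[OF a] xy inj_onD by metis
  qed
  ultimately show ?thesis unfolding inj_hom_def by blast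
qed

lemma conj_equiv_equiv:
  assumes G: "group G"
  shows "equiv (inj_hom Q G) (conj_equiv Q G)"
proof -
  interpret G: group G by (rule G)
  show ?thesis
  proof (rule equivI)
    show "conj_equiv Q G \<subseteq> inj_hom Q G \<times> inj_hom Q G" unfolding conj_equiv_def by blast
    show "refl_on (inj_hom Q G) (conj_equiv Q G)"
    proof (rule refl_onI)
      fix \<alpha> assume a: "\<alpha> \<in> inj_hom Q G"
      have "\<forall>x\<in>carrier Q. \<alpha> x = \<one>\<^bsub>G\<^esub> \<otimes>\<^bsub>G\<^esub> \<alpha> x \<otimes>\<^bsub>G\<^esub> inv\<^bsub>G\<^esub> \<one>\<^bsub>G\<^esub>"
        using inj_hom_carrier[OF a] by simp
      then show "(\<alpha>, \<alpha>) \<in> conj_equiv Q G" unfolding conj_equiv_def using a G.one_closed by blast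
    qed
    show "sym (conj_equiv Q G)"
    proof (rule symI)
      fix \<alpha> \<beta> assume "(\<alpha>, \<beta>) \<in> conj_equiv Q G"
      then obtain g where ab: "\<alpha> \<in> inj_hom Q G" "\<beta> \<in> inj_hom Q G" and g: "g \<in> carrier G"
        and e: "\<forall>x\<in>carrier Q. \<beta> x = g \<otimes>\<^bsub>G\<^esub> \<alpha> x \<otimes>\<^bsub>G\<^esub> inv\<^bsub>G\<^esub> g" unfolding conj_equiv_def by blast
      have "\<forall>x\<in>carrier Q. \<alpha> x = inv\<^bsub>G\<^esub> g \<otimes>\<^bsub>G\<^esub> \<beta> x \<otimes>\<^bsub>G\<^esub> inv\<^bsub>G\<^esub> (inv\<^bsub>G\<^esub> g)"
        using e g inj_hom_carrier[OF ab(1)] by (simp add: G.m_assoc)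
      then show "(\<beta>, \<alpha>) \<in> conj_equiv Q G" unfolding conj_equiv_def using ab g G.inv_closed by blast
    qed
    show "trans (conj_equiv Q G)"
    proof (rule transI)
      fix \<alpha> \<beta> \<gamma> assume "(\<alpha>, \<beta>) \<in> conj_equiv Q G" "(\<beta>, \<gamma>) \<in> conj_equiv Q G"
      then obtain g h where ab: "\<alpha> \<in> inj_hom Q G" "\<beta> \<in> inj_hom Q G" "\<gamma> \<in> inj_hom Q G" and g: "g \<in> carrier G"
        and h: "h \<in> carrier G"
        and e1: "\<forall>x\<in>carrier Q. \<beta> x = g \<otimes>\<^bsub>G\<^esub> \<alpha> x \<otimes>\<^bsub>G\<^esub> inv\<^bsub>G\<^esub> g"
        and e2: "\<forall>x\<in>carrier Q. \<gamma> x = h \<otimes>\<^bsub>G\<^esub> \<beta> x \<otimes>\<^bsub>G\<^esub> inv\<^bsub>G\<^esub> h" unfolding conj_equiv_def by blast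
      have "\<forall>x\<in>carrier Q. \<gamma> x = (h \<otimes>\<^bsub>G\<^esub> g) \<otimes>\<^bsub>G\<^esub> \<alpha> x \<otimes>\<^bsub>G\<^esub> inv\<^bsub>G\<^esub> (h \<otimes>\<^bsub>G\<^esub> g)"
        using e1 e2 g h inj_hom_carrier[OF ab(1)] by (simp add: G.m_assoc G.inv_mult_group)
      then show "(\<alpha>, \<gamma>) \<in> conj_equiv Q G" unfolding conj_equiv_def using ab g h G.m_closed by blast
    qed
  qed
qed

lemma conj_comp:
  assumes "(\<alpha>, \<beta>) \<in> conj_equiv T G" "\<gamma> \<in> inj_hom Q T"
  shows "((\<lambda>q. \<alpha> (\<gamma> q)), (\<lambda>q. \<beta> (\<gamma> q))) \<in> conj_equiv Q G"
proof -
  obtain g where ab: "\<alpha> \<in> inj_hom T G" "\<beta> \<in> inj_hom T G" and g: "g \<in> carrier G"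
    and e: "\<forall>x\<in>carrier T. \<beta> x = g \<otimes>\<^bsub>G\<^esub> \<alpha> x \<otimes>\<^bsub>G\<^esub> inv\<^bsub>G\<^esub> g" using assms(1) unfolding conj_equiv_def by blast
  have "\<forall>q\<in>carrier Q. \<beta> (\<gamma> q) = g \<otimes>\<^bsub>G\<^esub> \<alpha> (\<gamma> q) \<otimes>\<^bsub>G\<^esub> inv\<^bsub>G\<^esub> g"
    using e inj_hom_carrier[OF assms(2)] by blast
  then show ?thesis unfolding conj_equiv_def using inj_hom_comp[OF assms(2) ab(1)] inj_hom_comp[OF assms(2) ab(2)] g by blast
qed

lemma conj_cong:
  assumes "group Q" "(\<alpha>, \<beta>) \<in> conj_equiv Q G" "\<And>x. x \<in> carrier Q \<Longrightarrow> \<alpha>' x = \<alpha> x"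
    "\<And>x. x \<in> carrier Q \<Longrightarrow> \<beta>' x = \<beta> x"
  shows "(\<alpha>', \<beta>') \<in> conj_equiv Q G"
proof -
  obtain g where ab: "\<alpha> \<in> inj_hom Q G" "\<beta> \<in> inj_hom Q G" and g: "g \<in> carrier G"
    and e: "\<forall>x\<in>carrier Q. \<beta> x = g \<otimes>\<^bsub>G\<^esub> \<alpha> x \<otimes>\<^bsub>G\<^esub> inv\<^bsub>G\<^esub> g" using assms(2) unfolding conj_equiv_def by blast
  have "\<alpha>' \<in> inj_hom Q G" using inj_hom_cong[OF assms(1) ab(1) assms(3)] .
  moreover have "\<beta>' \<in> inj_hom Q G" using inj_hom_cong[OF assms(1) ab(2) assms(4)] .
  moreover have "\<forall>x\<in>carrier Q. \<beta>' x = g \<otimes>\<^bsub>G\<^esub> \<alpha>' x \<otimes>\<^bsub>G\<^esub> inv\<^bsub>G\<^esub> g" using e assms(3,4) by simp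
  ultimately show ?thesis unfolding conj_equiv_def using g by blast
qed

lemma conj_by:
  assumes "\<alpha> \<in> inj_hom Q G" "g \<in> carrier G" "\<beta> \<in> inj_hom Q G"
    "\<And>x. x \<in> carrier Q \<Longrightarrow> \<beta> x = g \<otimes>\<^bsub>G\<^esub> \<alpha> x \<otimes>\<^bsub>G\<^esub> inv\<^bsub>G\<^esub> g"
  shows "(\<alpha>, \<beta>) \<in> conj_equiv Q G"
  unfolding conj_equiv_def using assms by blast

lemma conj_conj_hom:
  assumes "group G" "\<alpha> \<in> inj_hom Q G" "g \<in> carrier G"
  shows "(\<lambda>x. g \<otimes>\<^bsub>G\<^esub> \<alpha> x \<otimes>\<^bsub>G\<^esub> inv\<^bsub>G\<^esub> g) \<in> inj_hom Q G"
  using inj_hom_comp[OF assms(2) iso_inj_hom[OF group.conj_iso[OF assms(1,3)]]] .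

lemma conj_post:
  assumes "giso G G' f" "(\<alpha>, \<beta>) \<in> conj_equiv Q G"
  shows "((\<lambda>q. f (\<alpha> q)), (\<lambda>q. f (\<beta> q))) \<in> conj_equiv Q G'"
proof -
  interpret giso G G' f by fact
  obtain g where ab: "\<alpha> \<in> inj_hom Q G" "\<beta> \<in> inj_hom Q G" and g: "g \<in> carrier G"
    and e: "\<forall>x\<in>carrier Q. \<beta> x = g \<otimes>\<^bsub>G\<^esub> \<alpha> x \<otimes>\<^bsub>G\<^esub> inv\<^bsub>G\<^esub> g" using assms(2) unfolding conj_equiv_def by blast
  have fi: "f \<in> inj_hom G G'" using iso_inj_hom[OF f_iso] .
  have "\<forall>x\<in>carrier Q. f (\<beta> x) = f g \<otimes>\<^bsub>G'\<^esub> f (\<alpha> x) \<otimes>\<^bsub>G'\<^esub> inv\<^bsub>G'\<^esub> (f g)"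
  proof
    fix x assume x: "x \<in> carrier Q"
    have ax: "\<alpha> x \<in> carrier G" using inj_hom_carrier[OF ab(1) x] .
    have "f (\<beta> x) = f (g \<otimes>\<^bsub>G\<^esub> \<alpha> x \<otimes>\<^bsub>G\<^esub> inv\<^bsub>G\<^esub> g)" using e x by simp
    also have "\<dots> = f g \<otimes>\<^bsub>G'\<^esub> f (\<alpha> x) \<otimes>\<^bsub>G'\<^esub> f (inv\<^bsub>G\<^esub> g)" using ax g by (simp add: f_mult)
    also have "f (inv\<^bsub>G\<^esub> g) = inv\<^bsub>G'\<^esub> (f g)"
      using group_hom.hom_inv[of G G' f] f_hom g G.group_axioms G'.group_axioms
      unfolding group_hom_def group_hom_axioms_def by blast
    finally show "f (\<beta> x) = f g \<otimes>\<^bsub>G'\<^esub> f (\<alpha> x) \<otimes>\<^bsub>G'\<^esub> inv\<^bsub>G'\<^esub> (f g)" .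
  qed
  then show ?thesis unfolding conj_equiv_def using inj_hom_comp[OF ab(1) fi] inj_hom_comp[OF ab(2) fi] f_carrier[OF g] by blast
qed

lemma inj_class_cong:
  assumes "group Q" "\<And>x. x \<in> carrier Q \<Longrightarrow> \<beta> x = \<alpha> x"
  shows "inj_class Q G \<alpha> = inj_class Q G \<beta>"
proof -
  have "(\<alpha>, y) \<in> conj_equiv Q G \<longleftrightarrow> (\<beta>, y) \<in> conj_equiv Q G" for y
  proof
    assume "(\<alpha>, y) \<in> conj_equiv Q G"
    then show "(\<beta>, y) \<in> conj_equiv Q G" by (rule conj_cong[OF assms(1)]) (use assms(2) in auto)
  next
    assume "(\<beta>, y) \<in> conj_equiv Q G"
    then show "(\<alpha>, y) \<in> conj_equiv Q G" by (rule conj_cong[OF assms(1)]) (use assms(2) in auto)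
  qed
  then show ?thesis unfolding inj_class_def by auto
qed

lemma inj_class_eq:
  assumes "group G" "(\<alpha>, \<beta>) \<in> conj_equiv Q G"
  shows "inj_class Q G \<alpha> = inj_class Q G \<beta>"
  unfolding inj_class_def using equiv_class_eq[OF conj_equiv_equiv[OF assms(1)] assms(2)] .

lemma inj_class_Inj: "\<alpha> \<in> inj_hom Q G \<Longrightarrow> inj_class Q G \<alpha> \<in> Inj Q G"
  unfolding inj_class_def Inj_def by (rule quotientI)

lemma inj_class_self: "group G \<Longrightarrow> \<alpha> \<in> inj_hom Q G \<Longrightarrow> \<alpha> \<in> inj_class Q G \<alpha>"
  unfolding inj_class_def using equiv_class_self conj_equiv_equiv by metis

lemma Inj_class: "group G \<Longrightarrow> c \<in> Inj Q G \<Longrightarrow> \<alpha> \<in> c \<Longrightarrow> c = inj_class Q G \<alpha>"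
  unfolding Inj_def inj_class_def using quot_eq_class conj_equiv_equiv by metis

lemma Inj_rel: "group G \<Longrightarrow> c \<in> Inj Q G \<Longrightarrow> \<alpha> \<in> c \<Longrightarrow> \<beta> \<in> c \<Longrightarrow> (\<alpha>, \<beta>) \<in> conj_equiv Q G"
  unfolding Inj_def using quot_rel conj_equiv_equiv by metis

lemma Inj_closed: "group G \<Longrightarrow> c \<in> Inj Q G \<Longrightarrow> \<alpha> \<in> c \<Longrightarrow> (\<alpha>, \<beta>) \<in> conj_equiv Q G \<Longrightarrow> \<beta> \<in> c"
  unfolding Inj_def using quot_closed conj_equiv_equiv by metis

lemma Inj_sub: "group G \<Longrightarrow> c \<in> Inj Q G \<Longrightarrow> c \<subseteq> inj_hom Q G"
  unfolding Inj_def using quot_sub conj_equiv_equiv by metis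

lemma Inj_nonempty: "group G \<Longrightarrow> c \<in> Inj Q G \<Longrightarrow> \<exists>\<alpha>. \<alpha> \<in> c"
  unfolding Inj_def using quot_nonempty conj_equiv_equiv by metis

lemma Inj_some: "group G \<Longrightarrow> c \<in> Inj Q G \<Longrightarrow> (SOME \<alpha>. \<alpha> \<in> c) \<in> c"
  using Inj_nonempty by (metis someI_ex)

lemma Inj_cong:
  assumes "group G" "group Q" "c \<in> Inj Q G" "\<alpha> \<in> c" "\<And>x. x \<in> carrier Q \<Longrightarrow> \<beta> x = \<alpha> x"
  shows "\<beta> \<in> c"
proof -
  have a: "\<alpha> \<in> inj_hom Q G" using Inj_sub assms by blast
  have "(\<alpha>, \<alpha>) \<in> conj_equiv Q G" using conj_equiv_equiv[OF assms(1), of Q] a unfolding equiv_def refl_on_def by blast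
  then have "(\<alpha>, \<beta>) \<in> conj_equiv Q G" using conj_cong[OF assms(2)] assms(5) by blast
  then show ?thesis using Inj_closed assms by blast
qed

lemma inj_hom_subgroup:
  assumes "group Q" "group G" "\<alpha> \<in> inj_hom Q G"
  shows "subgroup (\<alpha> ` carrier Q) G"
proof -
  have "group_hom Q G \<alpha>" using assms unfolding group_hom_def group_hom_axioms_def inj_hom_def by blast
  then show ?thesis using group_hom.img_is_subgroup by blast
qed

lemma inj_hom_card: "\<alpha> \<in> inj_hom Q G \<Longrightarrow> card (\<alpha> ` carrier Q) = card (carrier Q)"
  using inj_hom_inj card_image by blast

lemma conj_image:
  assumes "group G" "(\<alpha>, \<beta>) \<in> conj_equiv Q G"
  shows "\<exists>g\<in>carrier G. \<beta> ` carrier Q = (\<lambda>x. g \<otimes>\<^bsub>G\<^esub> x \<otimes>\<^bsub>G\<^esub> inv\<^bsub>G\<^esub> g) ` (\<alpha> ` carrier Q)"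
proof -
  obtain g where g: "g \<in> carrier G"
    and e: "\<forall>x\<in>carrier Q. \<beta> x = g \<otimes>\<^bsub>G\<^esub> \<alpha> x \<otimes>\<^bsub>G\<^esub> inv\<^bsub>G\<^esub> g" using assms(2) unfolding conj_equiv_def by blast
  have "\<beta> ` carrier Q = (\<lambda>x. g \<otimes>\<^bsub>G\<^esub> x \<otimes>\<^bsub>G\<^esub> inv\<^bsub>G\<^esub> g) ` (\<alpha> ` carrier Q)"
    using e by (auto simp: image_image)
  then show ?thesis using g by blast
qed

lemma cz_conj:
  assumes "group G" "finite (carrier G)" "group Q" "(\<alpha>, \<beta>) \<in> conj_equiv Q G"
  shows "cz_order G (\<beta> ` carrier Q) = cz_order G (\<alpha> ` carrier Q)"
proof -
  obtain g where g: "g \<in> carrier G" and e: "\<beta> ` carrier Q = (\<lambda>x. g \<otimes>\<^bsub>G\<^esub> x \<otimes>\<^bsub>G\<^esub> inv\<^bsub>G\<^esub> g) ` (\<alpha> ` carrier Q)"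
    using conj_image[OF assms(1,4)] by blast
  have a: "\<alpha> \<in> inj_hom Q G" using assms(4) unfolding conj_equiv_def by blast
  interpret giso G G "\<lambda>x. g \<otimes>\<^bsub>G\<^esub> x \<otimes>\<^bsub>G\<^esub> inv\<^bsub>G\<^esub> g" using giso_conj[OF assms(1) g] .
  show ?thesis unfolding e using f_cz[OF assms(2) inj_hom_subgroup[OF assms(3,1) a]] .
qed

lemma act_inj_class:
  assumes "group G" "\<alpha> \<in> inj_hom Q G" "\<phi> \<in> inj_hom Q Q"
  shows "act_inj Q G \<phi> (inj_class Q G \<alpha>) = inj_class Q G (\<lambda>q. \<alpha> (\<phi> q))"
proof -
  define \<beta> where "\<beta> = (SOME \<beta>. \<beta> \<in> inj_class Q G \<alpha>)"
  have "\<beta> \<in> inj_class Q G \<alpha>"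
    unfolding \<beta>_def by (rule someI[where P="\<lambda>\<beta>. \<beta> \<in> inj_class Q G \<alpha>", OF inj_class_self[OF assms(1,2)]])
  then have "(\<alpha>, \<beta>) \<in> conj_equiv Q G" unfolding inj_class_def by blast
  then have "((\<lambda>q. \<alpha> (\<phi> q)), (\<lambda>q. \<beta> (\<phi> q))) \<in> conj_equiv Q G" using conj_comp assms(3) by blast
  then have "inj_class Q G (\<lambda>q. \<alpha> (\<phi> q)) = inj_class Q G (\<lambda>q. \<beta> (\<phi> q))"
    by (rule inj_class_eq[OF assms(1)])
  then show ?thesis unfolding act_inj_def \<beta>_def[symmetric] by simp
qed

lemma map_inj_class:
  assumes f: "giso G G' f" and "\<alpha> \<in> inj_hom Q G"
  shows "map_inj Q G' f (inj_class Q G \<alpha>) = inj_class Q G' (\<lambda>q. f (\<alpha> q))"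
proof -
  interpret giso G G' f by (rule f)
  define \<beta> where "\<beta> = (SOME \<beta>. \<beta> \<in> inj_class Q G \<alpha>)"
  have "\<beta> \<in> inj_class Q G \<alpha>"
    unfolding \<beta>_def by (rule someI[where P="\<lambda>\<beta>. \<beta> \<in> inj_class Q G \<alpha>", OF inj_class_self[OF G.is_group assms(2)]])
  then have "(\<alpha>, \<beta>) \<in> conj_equiv Q G" unfolding inj_class_def by blast
  then have "((\<lambda>q. f (\<alpha> q)), (\<lambda>q. f (\<beta> q))) \<in> conj_equiv Q G'" using conj_post[OF f] by blast
  then have "inj_class Q G' (\<lambda>q. f (\<alpha> q)) = inj_class Q G' (\<lambda>q. f (\<beta> q))"
    by (rule inj_class_eq[OF G'.is_group])
  then show ?thesis unfolding map_inj_def \<beta>_def[symmetric] by simp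
qed


section \<open>The balanced product\<close>

lemma Cen_k_Inj: "c \<in> Cen_k p Qt Qs G \<Longrightarrow> c \<in> Inj Qt G"
  unfolding Cen_k_def Cen_def by blast

lemma R_setD:
  assumes "\<gamma> \<in> R_set Q Qt Qs"
  shows "\<gamma> \<in> inj_hom Q Qt" "\<gamma> \<in> extensional (carrier Q)" "\<gamma> ` carrier Q = Qs"
  using assms unfolding R_set_def by auto

lemma R_set_comp_image:
  assumes "\<gamma> \<in> R_set Q Qt Qs"
  shows "(\<lambda>q. \<delta> (\<gamma> q)) ` carrier Q = \<delta> ` Qs"
proof -
  have "\<delta> ` (\<gamma> ` carrier Q) = \<delta> ` Qs" using R_setD(3)[OF assms] by simp
  then show ?thesis by (simp add: image_image)
qed

lemma Aut_relD:
  assumes "a \<in> Aut_rel Qt Qs"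
  shows "a \<in> iso Qt Qt" "a ` Qs = Qs" "a \<in> inj_hom Qt Qt"
  using assms iso_inj_hom unfolding Aut_rel_def by auto

lemma compose_ext_eq:
  assumes "\<gamma>1 \<in> extensional A" "\<And>x. x \<in> A \<Longrightarrow> \<gamma>1 x = a (\<gamma>2 x)"
  shows "\<gamma>1 = compose A a \<gamma>2"
proof
  fix x show "\<gamma>1 x = compose A a \<gamma>2 x"
    using assms by (cases "x \<in> A") (auto simp: compose_def extensional_def)
qed

text \<open>A fixed pair \<open>Q\<^sub>s \<le> Q\<^sup>~\<close> (the locale parameters \<open>Qs \<le> Qt\<close>), a group \<open>G\<close> and a
  group \<open>Q\<close>; \<open>AA\<close> is \<open>R(Q,Q\<^sup>~) \<times> Cen\<^bsub>Q\<^sub>s\<^esub>(Q\<^sup>~,Q\<^sup>~,G)\<close> and \<open>BR\<close> the balancing relation.\<close>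
locale summand =
  fixes p :: nat and Q :: "'q monoid" and Qt :: "'h monoid" and Qs :: "'h set" and G :: "'g monoid"
  assumes grpG: "group G" and grpQ: "group Q" and grpQt: "group Qt" and Qs_sub: "subgroup Qs Qt"
begin

abbreviation "AA \<equiv> R_set Q Qt Qs \<times> Cen_k p Qt Qs G"
abbreviation "BR \<equiv> bal_rel p Q Qt Qs G"

lemma Qs_carrier: "Qs \<subseteq> carrier Qt" using Qs_sub subgroup.subset by blast

lemma bal_relD:
  assumes "((\<gamma>1, c1), (\<gamma>2, c2)) \<in> BR"
  obtains a \<delta> where "(\<gamma>1, c1) \<in> AA" "(\<gamma>2, c2) \<in> AA" "a \<in> Aut_rel Qt Qs"
    "\<gamma>1 = compose (carrier Q) a \<gamma>2" "\<delta> \<in> c1" "(\<lambda>x. \<delta> (a x)) \<in> c2"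
  using assms unfolding bal_rel_def by blast

lemma bal_relI:
  assumes "(\<gamma>1, c1) \<in> AA" "(\<gamma>2, c2) \<in> AA" "a \<in> Aut_rel Qt Qs"
    "\<gamma>1 = compose (carrier Q) a \<gamma>2" "\<delta> \<in> c1" "(\<lambda>x. \<delta> (a x)) \<in> c2"
  shows "((\<gamma>1, c1), (\<gamma>2, c2)) \<in> BR"
  using assms unfolding bal_rel_def by blast

lemma bal_rel_refl:
  assumes r: "(\<gamma>, c) \<in> AA"
  shows "((\<gamma>, c), (\<gamma>, c)) \<in> BR"
proof -
  have g: "\<gamma> \<in> R_set Q Qt Qs" and c: "c \<in> Cen_k p Qt Qs G" using r by auto
  obtain \<delta> where d: "\<delta> \<in> c" using Inj_nonempty[OF grpG Cen_k_Inj[OF c]] by blast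
  have idA: "(\<lambda>x. x) \<in> Aut_rel Qt Qs" unfolding Aut_rel_def using iso_set_refl by auto
  have "\<gamma> = compose (carrier Q) (\<lambda>x. x) \<gamma>"
    by (rule compose_ext_eq) (use R_setD(2)[OF g] in auto)
  moreover have "(\<lambda>x. \<delta> x) \<in> c" using d by simp
  ultimately show ?thesis using bal_relI[OF r r idA _ d] by blast
qed

lemma bal_rel_sym:
  assumes rr: "((\<gamma>1, c1), (\<gamma>2, c2)) \<in> BR"
  shows "((\<gamma>2, c2), (\<gamma>1, c1)) \<in> BR"
proof -
  obtain a \<delta> where A1: "(\<gamma>1, c1) \<in> AA" and A2: "(\<gamma>2, c2) \<in> AA" and a: "a \<in> Aut_rel Qt Qs"
    and ge: "\<gamma>1 = compose (carrier Q) a \<gamma>2" and d: "\<delta> \<in> c1" and da: "(\<lambda>x. \<delta> (a x)) \<in> c2"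
    using rr bal_relD by metis
  define a' where "a' = inv_into (carrier Qt) a"
  have aiso: "a \<in> iso Qt Qt" and aQs: "a ` Qs = Qs" using Aut_relD[OF a] by auto
  have ainj: "inj_on a (carrier Qt)" and asurj: "a ` carrier Qt = carrier Qt"
    using aiso unfolding iso_def bij_betw_def by auto
  have a'iso: "a' \<in> iso Qt Qt" unfolding a'_def using group.iso_set_sym[OF grpQt aiso] .
  have "a' ` Qs = Qs" unfolding a'_def using inv_into_image_cancel[OF ainj Qs_carrier] aQs by simp
  then have a'A: "a' \<in> Aut_rel Qt Qs" unfolding Aut_rel_def using a'iso by blast
  have g1: "\<gamma>1 \<in> R_set Q Qt Qs" and g2: "\<gamma>2 \<in> R_set Q Qt Qs" using A1 A2 by auto
  have "\<gamma>2 = compose (carrier Q) a' \<gamma>1"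
  proof (rule compose_ext_eq)
    show "\<gamma>2 \<in> extensional (carrier Q)" using R_setD(2)[OF g2] .
    fix x assume x: "x \<in> carrier Q"
    have "\<gamma>2 x \<in> carrier Qt" using inj_hom_carrier[OF R_setD(1)[OF g2] x] .
    moreover have "\<gamma>1 x = a (\<gamma>2 x)" using ge x by (simp add: compose_def)
    ultimately show "\<gamma>2 x = a' (\<gamma>1 x)" unfolding a'_def using ainj by simp
  qed
  moreover have "(\<lambda>x. (\<lambda>x. \<delta> (a x)) (a' x)) \<in> c1"
  proof (rule Inj_cong[OF grpG grpQt _ d])
    show "c1 \<in> Inj Qt G" using A1 Cen_k_Inj by auto
    fix x assume x: "x \<in> carrier Qt"
    show "(\<lambda>x. \<delta> (a x)) (a' x) = \<delta> x" unfolding a'_def using x asurj by (simp add: f_inv_into_f)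
  qed
  ultimately show ?thesis using bal_relI[OF A2 A1 a'A _ da] by blast
qed

lemma bal_rel_trans:
  assumes rr: "((\<gamma>1, c1), (\<gamma>2, c2)) \<in> BR" "((\<gamma>2, c2), (\<gamma>3, c3)) \<in> BR"
  shows "((\<gamma>1, c1), (\<gamma>3, c3)) \<in> BR"
proof -
  obtain a \<delta> where A1: "(\<gamma>1, c1) \<in> AA" and A2: "(\<gamma>2, c2) \<in> AA" and a: "a \<in> Aut_rel Qt Qs"
    and ge: "\<gamma>1 = compose (carrier Q) a \<gamma>2" and d: "\<delta> \<in> c1" and da: "(\<lambda>x. \<delta> (a x)) \<in> c2"
    using rr(1) bal_relD by metis
  obtain b \<delta>' where A3: "(\<gamma>3, c3) \<in> AA" and b: "b \<in> Aut_rel Qt Qs"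
    and ge2: "\<gamma>2 = compose (carrier Q) b \<gamma>3" and d': "\<delta>' \<in> c2" and db: "(\<lambda>x. \<delta>' (b x)) \<in> c3"
    using rr(2) bal_relD by metis
  have abA: "(\<lambda>x. a (b x)) \<in> Aut_rel Qt Qs"
  proof -
    have "a \<circ> b \<in> iso Qt Qt" using iso_set_trans[OF Aut_relD(1)[OF b] Aut_relD(1)[OF a]] .
    moreover have "(\<lambda>x. a (b x)) ` Qs = Qs" using Aut_relD(2)[OF a] Aut_relD(2)[OF b] by (simp add: image_image[symmetric])
    ultimately show ?thesis unfolding Aut_rel_def comp_def by simp
  qed
  have g3: "\<gamma>3 \<in> R_set Q Qt Qs" using A3 by auto
  have "\<gamma>1 = compose (carrier Q) (\<lambda>x. a (b x)) \<gamma>3"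
  proof (rule compose_ext_eq)
    show "\<gamma>1 \<in> extensional (carrier Q)" using ge by (simp add: compose_def)
    fix x assume x: "x \<in> carrier Q"
    show "\<gamma>1 x = a (b (\<gamma>3 x))" using ge ge2 x by (simp add: compose_def)
  qed
  moreover have "(\<lambda>x. \<delta> (a (b x))) \<in> c3"
  proof -
    have c2I: "c2 \<in> Inj Qt G" using A2 Cen_k_Inj by auto
    have c3I: "c3 \<in> Inj Qt G" using A3 Cen_k_Inj by auto
    have "((\<lambda>x. \<delta>' x), (\<lambda>x. \<delta> (a x))) \<in> conj_equiv Qt G" using Inj_rel[OF grpG c2I d' da] by simp
    from conj_comp[OF this Aut_relD(3)[OF b]]
    have "((\<lambda>q. \<delta>' (b q)), (\<lambda>q. \<delta> (a (b q)))) \<in> conj_equiv Qt G" .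
    then show ?thesis using Inj_closed[OF grpG c3I db] by blast
  qed
  ultimately show ?thesis using bal_relI[OF A1 A3 abA _ d] by blast
qed

lemma bal_equiv: "equiv AA BR"
proof (rule equivI)
  show "BR \<subseteq> AA \<times> AA" unfolding bal_rel_def by blast
  show "refl_on AA BR"
  proof (rule refl_onI)
    fix r assume "r \<in> AA" then show "(r, r) \<in> BR" using bal_rel_refl by (metis prod.collapse)
  qed
  show "sym BR"
  proof (rule symI)
    fix r1 r2 assume "(r1, r2) \<in> BR"
    then show "(r2, r1) \<in> BR" using bal_rel_sym by (metis prod.collapse)
  qed
  show "trans BR"
  proof (rule transI)
    fix r1 r2 r3 assume "(r1, r2) \<in> BR" "(r2, r3) \<in> BR"
    then show "(r1, r3) \<in> BR" using bal_rel_trans by (metis prod.collapse)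
  qed
qed

text \<open>Balanced pairs have conjugate composites \<open>\<delta> \<circ> \<gamma>\<close>; hence \<open>\<psi>\<close> is well defined.\<close>
lemma bal_conj:
  assumes rr: "((\<gamma>1, c1), (\<gamma>2, c2)) \<in> BR" and d1: "\<delta>1 \<in> c1" and d2: "\<delta>2 \<in> c2"
  shows "((\<lambda>q. \<delta>1 (\<gamma>1 q)), (\<lambda>q. \<delta>2 (\<gamma>2 q))) \<in> conj_equiv Q G"
proof -
  obtain a \<delta> where A1: "(\<gamma>1, c1) \<in> AA" and A2: "(\<gamma>2, c2) \<in> AA" and a: "a \<in> Aut_rel Qt Qs"
    and ge: "\<gamma>1 = compose (carrier Q) a \<gamma>2" and d: "\<delta> \<in> c1" and da: "(\<lambda>x. \<delta> (a x)) \<in> c2"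
    using rr bal_relD by metis
  have c1I: "c1 \<in> Inj Qt G" and c2I: "c2 \<in> Inj Qt G" using A1 A2 Cen_k_Inj by auto
  have g1: "\<gamma>1 \<in> inj_hom Q Qt" and g2: "\<gamma>2 \<in> inj_hom Q Qt" using A1 A2 R_setD(1) by auto
  have e1: "((\<lambda>q. \<delta>1 (\<gamma>1 q)), (\<lambda>q. \<delta> (\<gamma>1 q))) \<in> conj_equiv Q G"
    using conj_comp[OF Inj_rel[OF grpG c1I d1 d] g1] .
  have e2: "((\<lambda>q. \<delta> (a (\<gamma>2 q))), (\<lambda>q. \<delta>2 (\<gamma>2 q))) \<in> conj_equiv Q G"
    using conj_comp[OF Inj_rel[OF grpG c2I da d2] g2] by simp
  have e2': "((\<lambda>q. \<delta> (\<gamma>1 q)), (\<lambda>q. \<delta>2 (\<gamma>2 q))) \<in> conj_equiv Q G"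
    by (rule conj_cong[OF grpQ e2]) (use ge in \<open>simp_all add: compose_def\<close>)
  show ?thesis using e1 e2' conj_equiv_equiv[OF grpG] unfolding equiv_def trans_def by blast
qed

lemma Bal_some:
  assumes "x \<in> Bal p Q Qt Qs G"
  shows "(SOME r. r \<in> x) \<in> x"
  using quot_some[OF bal_equiv] assms unfolding Bal_def by blast

lemma Bal_sub: "x \<in> Bal p Q Qt Qs G \<Longrightarrow> x \<subseteq> AA"
  using quot_sub[OF bal_equiv] unfolding Bal_def by blast

lemma psi_wd:
  assumes x: "x \<in> Bal p Q Qt Qs G" and r: "r \<in> x" and d: "\<delta> \<in> snd r"
  shows "psi Q G x = inj_class Q G (\<lambda>q. \<delta> (fst r q))"
proof -
  define r0 where "r0 = (SOME r. r \<in> x)"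
  have r0: "r0 \<in> x" unfolding r0_def using Bal_some[OF x] .
  have r0A: "r0 \<in> AA" using Bal_sub[OF x] r0 by blast
  have c0: "snd r0 \<in> Inj Qt G" using r0A Cen_k_Inj by auto
  define \<delta>0 where "\<delta>0 = (SOME \<delta>. \<delta> \<in> snd r0)"
  have d0: "\<delta>0 \<in> snd r0" unfolding \<delta>0_def using Inj_some[OF grpG c0] .
  have "(r0, r) \<in> BR" using quot_rel[OF bal_equiv] x r0 r unfolding Bal_def by blast
  then have "((fst r0, snd r0), (fst r, snd r)) \<in> BR" by simp
  from bal_conj[OF this d0 d]
  have "((\<lambda>q. \<delta>0 (fst r0 q)), (\<lambda>q. \<delta> (fst r q))) \<in> conj_equiv Q G" .
  then have "inj_class Q G (\<lambda>q. \<delta>0 (fst r0 q)) = inj_class Q G (\<lambda>q. \<delta> (fst r q))"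
    using inj_class_eq[OF grpG] by blast
  then show ?thesis unfolding psi_def Let_def r0_def[symmetric] \<delta>0_def[symmetric] .
qed

lemma Bal_rep:
  assumes x: "x \<in> Bal p Q Qt Qs G"
  obtains \<gamma> c \<delta> where "(SOME r. r \<in> x) = (\<gamma>, c)" "(\<gamma>, c) \<in> x"
    "\<gamma> \<in> R_set Q Qt Qs" "c \<in> Cen_k p Qt Qs G" "\<delta> \<in> c" "\<delta> \<in> inj_hom Qt G"
    "psi Q G x = inj_class Q G (\<lambda>q. \<delta> (\<gamma> q))"
proof -
  obtain \<gamma> c where rc: "(SOME r. r \<in> x) = (\<gamma>, c)" by (cases "SOME r. r \<in> x")
  have r: "(\<gamma>, c) \<in> x" using Bal_some[OF x] rc by simp
  then have A: "(\<gamma>, c) \<in> AA" using Bal_sub[OF x] by blast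
  then have cI: "c \<in> Inj Qt G" using Cen_k_Inj by auto
  obtain \<delta> where d: "\<delta> \<in> c" using Inj_nonempty[OF grpG cI] by blast
  have "\<delta> \<in> inj_hom Qt G" using Inj_sub[OF grpG cI] d by blast
  moreover have "psi Q G x = inj_class Q G (\<lambda>q. \<delta> (\<gamma> q))" using psi_wd[OF x r] d by simp
  ultimately show ?thesis using that rc r A d by blast
qed

end



section \<open>Representatives of \<open>Cen\<^bsub>Q\<^sub>s\<^esub>(Q\<^sup>~,Q\<^sup>~,G)\<close>; the image of \<open>\<psi>\<close>\<close>

text \<open>An injective homomorphism from \<open>P\<^sup>~\<close> into \<open>G\<close> which maps \<open>P\<close> onto itself maps \<open>P\<^sup>~\<close>
  onto another choice of \<open>P\<^sup>~\<close>: it preserves \<open>P C\<^sub>G(P)\<close> and the order of \<open>P\<^sup>~\<close>.\<close>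
lemma (in group) tilde_transfer:
  assumes S: "is_tilde G p P S" and PS: "P \<subseteq> S" and Pc: "P \<subseteq> carrier G"
    and th: "\<theta> \<in> hom (G\<lparr>carrier := S\<rparr>) G" "inj_on \<theta> S" and thP: "\<theta> ` P = P"
  shows "is_tilde G p P (\<theta> ` S)"
proof -
  define K where "K = P <#> centralizer G P"
  have SG: "subgroup S G" and SK: "S \<subseteq> K" and cS: "\<exists>n. card S = p ^ n"
    and nd: "\<not> p dvd (card K div card S)" using is_tildeD[OF S] by (simp_all add: K_def)
  have th_mult: "\<theta> (a \<otimes> b) = \<theta> a \<otimes> \<theta> b" if "a \<in> S" "b \<in> S" for a b
    using th(1) that unfolding hom_def by simp
  have th_car: "\<theta> a \<in> carrier G" if "a \<in> S" for a
    using th(1) that unfolding hom_def by auto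
  have "group_hom (G\<lparr>carrier := S\<rparr>) G \<theta>"
    using th(1) subgroup.subgroup_is_group[OF SG is_group] is_group
    unfolding group_hom_def group_hom_axioms_def by blast
  then have T0s: "subgroup (\<theta> ` S) G" using group_hom.img_is_subgroup by fastforce
  have T0K: "\<theta> ` S \<subseteq> K"
  proof
    fix w assume "w \<in> \<theta> ` S"
    then obtain y where y: "y \<in> S" and w: "w = \<theta> y" by blast
    have "y \<in> K" using y SK by blast
    then obtain h c where h: "h \<in> P" and c: "c \<in> centralizer G P" and ye: "y = h \<otimes> c"
      unfolding K_def by (rule set_mult_memE)
    have hc: "h \<in> carrier G" using h Pc by blast
    have cc: "c \<in> carrier G" using c unfolding centralizer_def by blast
    have hS: "h \<in> S" using h PS by blast
    have "c = inv h \<otimes> y" using ye hc cc by simp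
    then have cS: "c \<in> S" using hS y SG by (simp add: subgroup.m_closed subgroup.m_inv_closed)
    have "\<forall>u\<in>P. \<theta> c \<otimes> u = u \<otimes> \<theta> c"
    proof
      fix u assume "u \<in> P"
      then obtain v where v: "v \<in> P" and u: "u = \<theta> v" using thP by (metis imageE)
      have vS: "v \<in> S" using v PS by blast
      have "c \<otimes> v = v \<otimes> c" using c v unfolding centralizer_def by blast
      then show "\<theta> c \<otimes> u = u \<otimes> \<theta> c" using th_mult[OF cS vS] th_mult[OF vS cS] u by simp
    qed
    then have "\<theta> c \<in> centralizer G P" unfolding centralizer_def using th_car[OF cS] by blast
    moreover have "\<theta> h \<in> P" using thP h by blast
    moreover have "w = \<theta> h \<otimes> \<theta> c" using w ye th_mult[OF hS cS] by simp
    ultimately show "w \<in> K" unfolding K_def by (intro set_mult_memI)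
  qed
  have "card (\<theta> ` S) = card S" using th(2) by (simp add: card_image)
  then show ?thesis unfolding is_tilde_def sylow_of_def p_subgroup_def K_def[symmetric]
    using T0s T0K cS nd by auto
qed

locale pgroup_summand = summand +
  assumes finG: "finite (carrier G)" and pr: "Factorial_Ring.prime p"
    and pQt: "\<exists>n. card (carrier Qt) = p ^ n"
begin

lemma finQt: "finite (carrier Qt)"
proof (rule ccontr)
  assume "\<not> finite (carrier Qt)"
  then have "card (carrier Qt) = 0" by simp
  then show False using pQt pr by (metis not_prime_0 power_eq_0_iff)
qed

lemma image_Qs_p_subgroup:
  assumes d: "\<delta> \<in> inj_hom Qt G"
  shows "p_subgroup G p (\<delta> ` Qs)" and "card (\<delta> ` Qs) = card Qs"
proof -
  obtain n where n: "card (carrier Qt) = p ^ n" using pQt by blast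
  have "card Qs dvd card (carrier Qt)"
    using group.subgroup_card_dvd[OF grpQt finQt Qs_sub group.subgroup_self[OF grpQt]] Qs_carrier by blast
  then obtain i where i: "card Qs = p ^ i" using n divides_primepow_nat[OF pr] by auto
  have "group_hom Qt G \<delta>" using d grpQt grpG unfolding group_hom_def group_hom_axioms_def inj_hom_def by blast
  then have "subgroup (\<delta> ` Qs) G" using group_hom.subgroup_img_is_subgroup[OF _ Qs_sub] by blast
  moreover show cP: "card (\<delta> ` Qs) = card Qs"
    using inj_hom_inj[OF d] Qs_carrier by (meson card_image inj_on_subset)
  ultimately show "p_subgroup G p (\<delta> ` Qs)" unfolding p_subgroup_def using i by auto
qed

text \<open>If \<open>(\<beta>(Q\<^sub>s), S)\<close> with \<open>S\<close> a choice of \<open>\<beta>(Q\<^sub>s)\<^sup>~\<close> is equivalent to \<open>(Q\<^sub>s, Q\<^sup>~)\<close>, then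
  \<open>\<beta>(Q\<^sup>~)\<close> itself is a choice of \<open>\<beta>(Q\<^sub>s)\<^sup>~\<close> (transfer along \<open>\<beta> \<circ> s\<close>).\<close>
lemma tilde_of_pair_witness:
  assumes d: "\<beta> \<in> inj_hom Qt G" and S: "is_tilde G p (\<beta> ` Qs) S"
    and s: "s \<in> iso (G\<lparr>carrier := S\<rparr>) Qt" and sP: "s ` (\<beta> ` Qs) = Qs"
  shows "is_tilde G p (\<beta> ` Qs) (\<beta> ` carrier Qt)"
proof -
  interpret G: group G by (rule grpG)
  have Pp: "p_subgroup G p (\<beta> ` Qs)" using image_Qs_p_subgroup(1)[OF d] .
  have Pc: "\<beta> ` Qs \<subseteq> carrier G" using Pp subgroup.subset unfolding p_subgroup_def by blast
  have PS: "\<beta> ` Qs \<subseteq> S" using G.tilde_contains[OF finG pr Pp S] .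
  have s_hom: "s \<in> hom (G\<lparr>carrier := S\<rparr>) Qt" and s_bij: "bij_betw s S (carrier Qt)"
    using s unfolding iso_def by auto
  define \<theta> where "\<theta> = (\<lambda>y. \<beta> (s y))"
  have th_hom: "\<theta> \<in> hom (G\<lparr>carrier := S\<rparr>) G"
  proof (rule homI)
    fix a assume "a \<in> carrier (G\<lparr>carrier := S\<rparr>)"
    then show "\<theta> a \<in> carrier G" unfolding \<theta>_def using bij_betwE[OF s_bij] inj_hom_carrier[OF d] by auto
  next
    fix a b assume ab: "a \<in> carrier (G\<lparr>carrier := S\<rparr>)" "b \<in> carrier (G\<lparr>carrier := S\<rparr>)"
    then have "s (a \<otimes>\<^bsub>G\<^esub> b) = s a \<otimes>\<^bsub>Qt\<^esub> s b" using s_hom unfolding hom_def by simp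
    moreover have "s a \<in> carrier Qt" "s b \<in> carrier Qt" using ab bij_betwE[OF s_bij] by auto
    ultimately show "\<theta> (a \<otimes>\<^bsub>G\<lparr>carrier := S\<rparr>\<^esub> b) = \<theta> a \<otimes>\<^bsub>G\<^esub> \<theta> b"
      unfolding \<theta>_def using inj_hom_mult[OF d] by simp
  qed
  have "inj_on (\<beta> \<circ> s) S"
    using comp_inj_on[of s S \<beta>] s_bij inj_hom_inj[OF d] unfolding bij_betw_def by simp
  then have th_inj: "inj_on \<theta> S" unfolding \<theta>_def comp_def .
  have thP: "\<theta> ` (\<beta> ` Qs) = \<beta> ` Qs" unfolding \<theta>_def using sP by (simp add: image_image[symmetric])
  have "\<theta> ` S = \<beta> ` carrier Qt"
    unfolding \<theta>_def using s_bij by (simp add: image_image[symmetric] bij_betw_def)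
  then show ?thesis using G.tilde_transfer[OF S PS Pc th_hom th_inj thP] by simp
qed

lemma Cen_k_tilde:
  assumes c: "c \<in> Cen_k p Qt Qs G" and d: "\<delta> \<in> c"
  shows "is_tilde G p (\<delta> ` Qs) (\<delta> ` carrier Qt)"
proof -
  obtain \<beta> S where b: "\<beta> \<in> c" and S: "is_tilde G p (\<beta> ` Qs) S"
    and pe: "pair_equiv (G\<lparr>carrier := S\<rparr>) (\<beta> ` Qs) Qt Qs"
    using c unfolding Cen_k_def by blast
  obtain s where s: "s \<in> iso (G\<lparr>carrier := S\<rparr>) Qt" "s ` (\<beta> ` Qs) = Qs" using pe unfolding pair_equiv_def by blast
  have cI: "c \<in> Inj Qt G" using Cen_k_Inj[OF c] .
  have bi: "\<beta> \<in> inj_hom Qt G" using Inj_sub[OF grpG cI] b by blast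
  have kb: "is_tilde G p (\<beta> ` Qs) (\<beta> ` carrier Qt)" using tilde_of_pair_witness[OF bi S s] .
  have "(\<beta>, \<delta>) \<in> conj_equiv Qt G" using Inj_rel[OF grpG cI b d] .
  then obtain g where g: "g \<in> carrier G" and e: "\<forall>x\<in>carrier Qt. \<delta> x = g \<otimes>\<^bsub>G\<^esub> \<beta> x \<otimes>\<^bsub>G\<^esub> inv\<^bsub>G\<^esub> g"
    unfolding conj_equiv_def by blast
  interpret giso G G "\<lambda>x. g \<otimes>\<^bsub>G\<^esub> x \<otimes>\<^bsub>G\<^esub> inv\<^bsub>G\<^esub> g" using giso_conj[OF grpG g] .
  have P0s: "subgroup (\<beta> ` Qs) G" using image_Qs_p_subgroup(1)[OF bi] unfolding p_subgroup_def by blast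
  have "\<delta> ` Qs = (\<lambda>y. g \<otimes>\<^bsub>G\<^esub> \<beta> y \<otimes>\<^bsub>G\<^esub> inv\<^bsub>G\<^esub> g) ` Qs"
    using e Qs_carrier by (intro image_cong) auto
  then have e1: "\<delta> ` Qs = (\<lambda>x. g \<otimes>\<^bsub>G\<^esub> x \<otimes>\<^bsub>G\<^esub> inv\<^bsub>G\<^esub> g) ` (\<beta> ` Qs)"
    by (simp add: image_image)
  have "\<delta> ` carrier Qt = (\<lambda>y. g \<otimes>\<^bsub>G\<^esub> \<beta> y \<otimes>\<^bsub>G\<^esub> inv\<^bsub>G\<^esub> g) ` carrier Qt"
    using e by (intro image_cong) auto
  then have e2: "\<delta> ` carrier Qt = (\<lambda>x. g \<otimes>\<^bsub>G\<^esub> x \<otimes>\<^bsub>G\<^esub> inv\<^bsub>G\<^esub> g) ` (\<beta> ` carrier Qt)"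
    by (simp add: image_image)
  show ?thesis unfolding e1 e2 using f_tilde[OF P0s kb] .
qed

text \<open>\<open>\<psi>\<close> lands in \<open>nCen(Q,G)\<close> when \<open>Q\<^sub>s < Q\<^sup>~\<close>: the image \<open>\<delta>(Q\<^sub>s)\<close> is properly contained in
  its \<open>\<delta>(Q\<^sub>s)\<^sup>~ = \<delta>(Q\<^sup>~)\<close>.\<close>
lemma psi_nCen:
  assumes lt: "card Qs < card (carrier Qt)" and x: "x \<in> Bal p Q Qt Qs G"
  shows "psi Q G x \<in> nCen p Q G"
proof -
  interpret G: group G by (rule grpG)
  obtain \<gamma> c \<delta> where "(SOME r. r \<in> x) = (\<gamma>, c)" "(\<gamma>, c) \<in> x"
    and g: "\<gamma> \<in> R_set Q Qt Qs" and c: "c \<in> Cen_k p Qt Qs G" and d: "\<delta> \<in> c"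
    and di: "\<delta> \<in> inj_hom Qt G" and ps: "psi Q G x = inj_class Q G (\<lambda>q. \<delta> (\<gamma> q))"
    by (rule Bal_rep[OF x])
  define \<alpha>0 where "\<alpha>0 = (\<lambda>q. \<delta> (\<gamma> q))"
  have a0: "\<alpha>0 \<in> inj_hom Q G" unfolding \<alpha>0_def using inj_hom_comp[OF R_setD(1)[OF g] di] .
  have img: "\<alpha>0 ` carrier Q = \<delta> ` Qs" unfolding \<alpha>0_def using R_set_comp_image[OF g] .
  have "p dvd cz_order G (\<delta> ` Qs)"
    using G.lt_arising[OF finG pr image_Qs_p_subgroup(1)[OF di] Cen_k_tilde[OF c d]]
      image_Qs_p_subgroup(2)[OF di] inj_hom_card[OF di] lt by simp
  then have pd: "p dvd cz_order G (\<alpha>0 ` carrier Q)" using img by simp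
  have "inj_class Q G \<alpha>0 \<notin> Cen p Q G"
  proof
    assume "inj_class Q G \<alpha>0 \<in> Cen p Q G"
    then obtain \<alpha> where a: "\<alpha> \<in> inj_class Q G \<alpha>0" and nd: "\<not> p dvd cz_order G (\<alpha> ` carrier Q)"
      unfolding Cen_def by blast
    have "(\<alpha>0, \<alpha>) \<in> conj_equiv Q G" using a unfolding inj_class_def by blast
    then have "cz_order G (\<alpha> ` carrier Q) = cz_order G (\<alpha>0 ` carrier Q)" using cz_conj[OF grpG finG grpQ] by blast
    then show False using nd pd by simp
  qed
  then show ?thesis unfolding nCen_def ps \<alpha>0_def[symmetric] using inj_class_Inj[OF a0] by blast
qed


section \<open>Equivariance and naturality of \<open>\<psi>\<close>\<close>

lemma psi_equivariant:
  assumes phi: "\<phi> \<in> iso Q Q" and x: "x \<in> Bal p Q Qt Qs G"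
  shows "act_bal p Q Qt Qs G \<phi> x \<in> Bal p Q Qt Qs G \<and>
         psi Q G (act_bal p Q Qt Qs G \<phi> x) = act_inj Q G \<phi> (psi Q G x)"
proof -
  obtain \<gamma> c \<delta> where rc: "(SOME r. r \<in> x) = (\<gamma>, c)" and "(\<gamma>, c) \<in> x"
    and g: "\<gamma> \<in> R_set Q Qt Qs" and c: "c \<in> Cen_k p Qt Qs G" and d: "\<delta> \<in> c"
    and di: "\<delta> \<in> inj_hom Qt G" and ps: "psi Q G x = inj_class Q G (\<lambda>q. \<delta> (\<gamma> q))"
    by (rule Bal_rep[OF x])
  have gi: "\<gamma> \<in> inj_hom Q Qt" using R_setD(1)[OF g] .
  have phii: "\<phi> \<in> inj_hom Q Q" using iso_inj_hom[OF phi] .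
  have phis: "\<phi> ` carrier Q = carrier Q" using phi unfolding iso_def bij_betw_def by blast
  define \<gamma>' where "\<gamma>' = compose (carrier Q) \<gamma> \<phi>"
  have g'_eq: "\<gamma>' q = \<gamma> (\<phi> q)" if "q \<in> carrier Q" for q unfolding \<gamma>'_def using that by (simp add: compose_eq)
  have g'i: "\<gamma>' \<in> inj_hom Q Qt" using inj_hom_cong[OF grpQ inj_hom_comp[OF phii gi]] g'_eq by blast
  have "\<gamma>' ` carrier Q = \<gamma> ` \<phi> ` carrier Q" using g'_eq by (auto simp: image_image)
  then have g'img: "\<gamma>' ` carrier Q = Qs" using phis R_setD(3)[OF g] by simp
  have g'R: "\<gamma>' \<in> R_set Q Qt Qs" unfolding R_set_def using g'i g'img by (simp add: \<gamma>'_def)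
  have ab: "act_bal p Q Qt Qs G \<phi> x = BR `` {(\<gamma>', c)}"
    unfolding act_bal_def Let_def rc \<gamma>'_def by simp
  have A': "(\<gamma>', c) \<in> AA" using g'R c by simp
  have inB: "act_bal p Q Qt Qs G \<phi> x \<in> Bal p Q Qt Qs G" unfolding ab Bal_def by (rule quotientI[OF A'])
  have self: "(\<gamma>', c) \<in> act_bal p Q Qt Qs G \<phi> x" unfolding ab using equiv_class_self[OF bal_equiv A'] .
  have "psi Q G (act_bal p Q Qt Qs G \<phi> x) = inj_class Q G (\<lambda>q. \<delta> (\<gamma>' q))"
    using psi_wd[OF inB self] d by simp
  also have "\<dots> = inj_class Q G (\<lambda>q. \<delta> (\<gamma> (\<phi> q)))"
    by (rule inj_class_cong[OF grpQ]) (simp add: g'_eq)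
  also have "\<dots> = act_inj Q G \<phi> (psi Q G x)"
    unfolding ps using act_inj_class[OF grpG inj_hom_comp[OF gi di] phii] by simp
  finally show ?thesis using inB by simp
qed

lemma Cen_k_map:
  fixes G' :: "'g2 monoid"
  assumes gi: "giso G G' f" and c: "c \<in> Cen_k p Qt Qs G"
  shows "map_inj Qt G' f c \<in> Cen_k p Qt Qs G'"
proof -
  interpret F: giso G G' f by (rule gi)
  have cI: "c \<in> Inj Qt G" using Cen_k_Inj[OF c] .
  obtain \<beta> S where b: "\<beta> \<in> c" and S: "is_tilde G p (\<beta> ` Qs) S"
    and pe: "pair_equiv (G\<lparr>carrier := S\<rparr>) (\<beta> ` Qs) Qt Qs"
    using c unfolding Cen_k_def by blast
  obtain \<alpha>1 where a1: "\<alpha>1 \<in> c" and nd: "\<not> p dvd cz_order G (\<alpha>1 ` carrier Qt)"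
    using c unfolding Cen_k_def Cen_def by blast
  have bi: "\<beta> \<in> inj_hom Qt G" using Inj_sub[OF grpG cI] b by blast
  define \<beta>' where "\<beta>' = (\<lambda>q. f (\<beta> q))"
  have b'i: "\<beta>' \<in> inj_hom Qt G'" unfolding \<beta>'_def using inj_hom_comp[OF bi iso_inj_hom[OF F.f_iso]] .
  have mi: "map_inj Qt G' f c = inj_class Qt G' \<beta>'"
    unfolding \<beta>'_def using map_inj_class[OF gi bi] Inj_class[OF grpG cI b] by simp
  have b'self: "\<beta>' \<in> inj_class Qt G' \<beta>'" using inj_class_self[OF F.G'.is_group b'i] .
  have "cz_order G (\<beta> ` carrier Qt) = cz_order G (\<alpha>1 ` carrier Qt)"
    using cz_conj[OF grpG finG grpQt Inj_rel[OF grpG cI a1 b]] .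
  moreover have "cz_order G' (\<beta>' ` carrier Qt) = cz_order G (\<beta> ` carrier Qt)"
    unfolding \<beta>'_def using F.f_cz[OF finG inj_hom_subgroup[OF grpQt grpG bi]] by (simp add: image_image)
  ultimately have "\<not> p dvd cz_order G' (\<beta>' ` carrier Qt)" using nd by simp
  then have cen: "inj_class Qt G' \<beta>' \<in> Cen p Qt G'"
    unfolding Cen_def using inj_class_Inj[OF b'i] b'self by blast
  have Pp: "p_subgroup G p (\<beta> ` Qs)" using image_Qs_p_subgroup(1)[OF bi] .
  have P0s: "subgroup (\<beta> ` Qs) G" using Pp unfolding p_subgroup_def by blast
  have b'img: "\<beta>' ` Qs = f ` (\<beta> ` Qs)" unfolding \<beta>'_def by (simp add: image_image)
  have S': "is_tilde G' p (\<beta>' ` Qs) (f ` S)" unfolding b'img using F.f_tilde[OF P0s S] .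
  have PS: "\<beta> ` Qs \<subseteq> S" using F.G.tilde_contains[OF finG pr Pp S] .
  have SG: "subgroup S G" using is_tildeD(1)[OF S] .
  have Sc: "S \<subseteq> carrier G" using SG subgroup.subset by blast
  have grpS: "group (G\<lparr>carrier := S\<rparr>)" using subgroup.subgroup_is_group[OF SG grpG] .
  have pe1: "pair_equiv (G\<lparr>carrier := S\<rparr>) (\<beta> ` Qs) (G'\<lparr>carrier := f ` S\<rparr>) (f ` (\<beta> ` Qs))"
    using pair_equiv_iso[OF F.f_restrict_iso[OF Sc]] .
  have pe2: "pair_equiv (G'\<lparr>carrier := f ` S\<rparr>) (\<beta>' ` Qs) (G\<lparr>carrier := S\<rparr>) (\<beta> ` Qs)"
    unfolding b'img by (rule pair_equiv_sym[OF grpS _ pe1]) (use PS in simp)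
  have "pair_equiv (G'\<lparr>carrier := f ` S\<rparr>) (\<beta>' ` Qs) Qt Qs" using pair_equiv_trans[OF pe2 pe] .
  then show ?thesis unfolding mi Cen_k_def using cen b'self S' by blast
qed

lemma psi_natural:
  fixes G' :: "'g2 monoid"
  assumes gi: "giso G G' f" and x: "x \<in> Bal p Q Qt Qs G"
  shows "map_bal p Q Qt Qs G' f x \<in> Bal p Q Qt Qs G' \<and>
         psi Q G' (map_bal p Q Qt Qs G' f x) = map_inj Q G' f (psi Q G x)"
proof -
  interpret F: giso G G' f by (rule gi)
  interpret B': summand p Q Qt Qs G' using summand.intro[OF F.G'.is_group grpQ grpQt Qs_sub] .
  obtain \<gamma> c \<delta> where rc: "(SOME r. r \<in> x) = (\<gamma>, c)" and "(\<gamma>, c) \<in> x"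
    and g: "\<gamma> \<in> R_set Q Qt Qs" and c: "c \<in> Cen_k p Qt Qs G" and d: "\<delta> \<in> c"
    and di: "\<delta> \<in> inj_hom Qt G" and ps: "psi Q G x = inj_class Q G (\<lambda>q. \<delta> (\<gamma> q))"
    by (rule Bal_rep[OF x])
  have c': "map_inj Qt G' f c \<in> Cen_k p Qt Qs G'" using Cen_k_map[OF gi c] .
  have mb: "map_bal p Q Qt Qs G' f x = B'.BR `` {(\<gamma>, map_inj Qt G' f c)}"
    unfolding map_bal_def Let_def rc by simp
  have A': "(\<gamma>, map_inj Qt G' f c) \<in> B'.AA" using g c' by simp
  have inB: "map_bal p Q Qt Qs G' f x \<in> Bal p Q Qt Qs G'" unfolding mb Bal_def by (rule quotientI[OF A'])
  have self: "(\<gamma>, map_inj Qt G' f c) \<in> map_bal p Q Qt Qs G' f x"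
    unfolding mb using equiv_class_self[OF B'.bal_equiv A'] .
  have fdi: "(\<lambda>y. f (\<delta> y)) \<in> inj_hom Qt G'" using inj_hom_comp[OF di iso_inj_hom[OF F.f_iso]] .
  have "(\<lambda>y. f (\<delta> y)) \<in> map_inj Qt G' f c"
    using map_inj_class[OF gi di] Inj_class[OF grpG Cen_k_Inj[OF c] d] inj_class_self[OF F.G'.is_group fdi]
    by simp
  then have "psi Q G' (map_bal p Q Qt Qs G' f x) = inj_class Q G' (\<lambda>q. f (\<delta> (\<gamma> q)))"
    using B'.psi_wd[OF inB self] by simp
  also have "\<dots> = map_inj Q G' f (psi Q G x)"
    unfolding ps using map_inj_class[OF gi inj_hom_comp[OF R_setD(1)[OF g] di]] by simp
  finally show ?thesis using inB by simp
qed


section \<open>Injectivity of \<open>\<psi>\<close> on a single summand\<close>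

lemma conj_transport_iso:
  assumes grpT: "group T" and grpG: "group G" and d1: "\<delta>1 \<in> inj_hom T G" and d2: "\<delta>2 \<in> inj_hom T G"
    and g: "g \<in> carrier G"
    and img: "(\<lambda>y. g \<otimes>\<^bsub>G\<^esub> y \<otimes>\<^bsub>G\<^esub> inv\<^bsub>G\<^esub> g) ` (\<delta>2 ` carrier T) = \<delta>1 ` carrier T"
  shows "(\<lambda>y. inv_into (carrier T) \<delta>1 (g \<otimes>\<^bsub>G\<^esub> \<delta>2 y \<otimes>\<^bsub>G\<^esub> inv\<^bsub>G\<^esub> g)) \<in> iso T T"
proof -
  interpret C: giso G G "\<lambda>y. g \<otimes>\<^bsub>G\<^esub> y \<otimes>\<^bsub>G\<^esub> inv\<^bsub>G\<^esub> g" using giso_conj[OF grpG g] .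
  have inv1: "inv_into (carrier T) \<delta>1 \<in> iso (G\<lparr>carrier := \<delta>1 ` carrier T\<rparr>) T"
    using group.iso_set_sym[OF grpT inj_hom_iso_img[OF d1]] .
  have T2c: "\<delta>2 ` carrier T \<subseteq> carrier G" using inj_hom_carrier[OF d2] by blast
  have "(\<lambda>y. g \<otimes>\<^bsub>G\<^esub> y \<otimes>\<^bsub>G\<^esub> inv\<^bsub>G\<^esub> g) \<in> iso (G\<lparr>carrier := \<delta>2 ` carrier T\<rparr>) (G\<lparr>carrier := \<delta>1 ` carrier T\<rparr>)"
    using C.f_restrict_iso[OF T2c] img by simp
  from iso_set_trans[OF iso_set_trans[OF inj_hom_iso_img[OF d2] this] inv1]
  show ?thesis unfolding comp_def .
qed

text \<open>Two elements of the same summand whose composites \<open>\<delta> \<circ> \<gamma>\<close> agree are balanced: the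
  automorphism relating them comes from conjugating the two choices \<open>\<delta>\<^sub>i(Q\<^sup>~)\<close> of
  \<open>P\<^sup>~\<close> (\<open>P = \<delta>\<^sub>i(Q\<^sub>s)\<close>) into each other inside \<open>C\<^sub>G(P)\<close>.\<close>
lemma bal_rel_of_same_composite:
  assumes A1: "(\<gamma>1, c1) \<in> AA" and A2: "(\<gamma>2, c2) \<in> AA" and d1: "\<delta>1 \<in> c1" and d2: "\<delta>2 \<in> c2"
    and eq: "\<And>q. q \<in> carrier Q \<Longrightarrow> \<delta>2 (\<gamma>2 q) = \<delta>1 (\<gamma>1 q)"
  shows "((\<gamma>1, c1), (\<gamma>2, c2)) \<in> BR"
proof -
  interpret G: group G by (rule grpG)
  have g1: "\<gamma>1 \<in> R_set Q Qt Qs" and c1: "c1 \<in> Cen_k p Qt Qs G"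
    and g2: "\<gamma>2 \<in> R_set Q Qt Qs" and c2: "c2 \<in> Cen_k p Qt Qs G" using A1 A2 by auto
  have c2I: "c2 \<in> Inj Qt G" using Cen_k_Inj[OF c2] .
  have d1i: "\<delta>1 \<in> inj_hom Qt G" using Inj_sub[OF grpG Cen_k_Inj[OF c1]] d1 by blast
  have d2i: "\<delta>2 \<in> inj_hom Qt G" using Inj_sub[OF grpG c2I] d2 by blast
  define P where "P = \<delta>1 ` Qs"
  have "\<delta>2 ` Qs = (\<lambda>q. \<delta>2 (\<gamma>2 q)) ` carrier Q" using R_set_comp_image[OF g2, where \<delta>=\<delta>2] by simp
  also have "\<dots> = (\<lambda>q. \<delta>1 (\<gamma>1 q)) ` carrier Q" using eq by (intro image_cong) auto
  finally have P2: "\<delta>2 ` Qs = P" unfolding P_def using R_set_comp_image[OF g1, where \<delta>=\<delta>1] by simp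
  have Pp: "p_subgroup G p P" unfolding P_def using image_Qs_p_subgroup(1)[OF d1i] .
  have Pc: "P \<subseteq> carrier G" using Pp subgroup.subset unfolding p_subgroup_def by blast
  have til1: "is_tilde G p P (\<delta>1 ` carrier Qt)" unfolding P_def using Cen_k_tilde[OF c1 d1] .
  have til2: "is_tilde G p P (\<delta>2 ` carrier Qt)" unfolding P2[symmetric] using Cen_k_tilde[OF c2 d2] .
  obtain g where gC: "g \<in> centralizer G P"
    and gT: "(\<lambda>y. g \<otimes>\<^bsub>G\<^esub> y \<otimes>\<^bsub>G\<^esub> inv\<^bsub>G\<^esub> g) ` (\<delta>2 ` carrier Qt) = \<delta>1 ` carrier Qt"
    using G.tildes_conj[OF finG pr Pp til2 til1] by blast
  have gc: "g \<in> carrier G" using gC unfolding centralizer_def by blast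
  define a where "a = (\<lambda>y. inv_into (carrier Qt) \<delta>1 (g \<otimes>\<^bsub>G\<^esub> \<delta>2 y \<otimes>\<^bsub>G\<^esub> inv\<^bsub>G\<^esub> g))"
  have d1inj: "inj_on \<delta>1 (carrier Qt)" using inj_hom_inj[OF d1i] .
  have d1a: "\<delta>1 (a y) = g \<otimes>\<^bsub>G\<^esub> \<delta>2 y \<otimes>\<^bsub>G\<^esub> inv\<^bsub>G\<^esub> g" if "y \<in> carrier Qt" for y
  proof -
    have "g \<otimes>\<^bsub>G\<^esub> \<delta>2 y \<otimes>\<^bsub>G\<^esub> inv\<^bsub>G\<^esub> g \<in> \<delta>1 ` carrier Qt" using gT that by blast
    then show ?thesis unfolding a_def by (rule f_inv_into_f)
  qed
  have "a ` Qs = inv_into (carrier Qt) \<delta>1 ` ((\<lambda>y. g \<otimes>\<^bsub>G\<^esub> y \<otimes>\<^bsub>G\<^esub> inv\<^bsub>G\<^esub> g) ` (\<delta>2 ` Qs))"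
    unfolding a_def by (simp add: image_image)
  also have "\<dots> = inv_into (carrier Qt) \<delta>1 ` P" using P2 G.conj_img_fix[OF gC Pc] by simp
  also have "\<dots> = Qs" unfolding P_def using inv_into_image_cancel[OF d1inj Qs_carrier] .
  finally have aQs: "a ` Qs = Qs" .
  have "a \<in> iso Qt Qt" unfolding a_def using conj_transport_iso[OF grpQt grpG d1i d2i gc gT] .
  then have aA: "a \<in> Aut_rel Qt Qs" unfolding Aut_rel_def using aQs by blast
  have gcomp: "\<gamma>1 = compose (carrier Q) a \<gamma>2"
  proof (rule compose_ext_eq)
    show "\<gamma>1 \<in> extensional (carrier Q)" using R_setD(2)[OF g1] .
    fix q assume q: "q \<in> carrier Q"
    have inP: "\<delta>2 (\<gamma>2 q) \<in> P" using P2 R_setD(3)[OF g2] q by blast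
    have "a (\<gamma>2 q) = inv_into (carrier Qt) \<delta>1 (\<delta>2 (\<gamma>2 q))"
      unfolding a_def using G.cent_conj_fix[OF gC inP Pc] by simp
    also have "\<dots> = \<gamma>1 q" using eq[OF q] inv_into_f_f[OF d1inj inj_hom_carrier[OF R_setD(1)[OF g1] q]] by simp
    finally show "\<gamma>1 q = a (\<gamma>2 q)" by simp
  qed
  have "(\<delta>2, \<lambda>y. g \<otimes>\<^bsub>G\<^esub> \<delta>2 y \<otimes>\<^bsub>G\<^esub> inv\<^bsub>G\<^esub> g) \<in> conj_equiv Qt G"
    using conj_by[OF d2i gc conj_conj_hom[OF grpG d2i gc]] by simp
  then have "(\<lambda>y. g \<otimes>\<^bsub>G\<^esub> \<delta>2 y \<otimes>\<^bsub>G\<^esub> inv\<^bsub>G\<^esub> g) \<in> c2" using Inj_closed[OF grpG c2I d2] by blast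
  then have "(\<lambda>y. \<delta>1 (a y)) \<in> c2" by (rule Inj_cong[OF grpG grpQt c2I _ d1a])
  then show ?thesis using bal_relI[OF A1 A2 aA gcomp d1] by blast
qed

section \<open>Every non-centric class is hit\<close>

text \<open>An arising pair \<open>(H, H\<^sup>~)\<close> identified with \<open>(Q\<^sub>s, Q\<^sup>~)\<close> by \<open>s\<close> gives the element
  \<open>[s\<inverse>]\<close> of \<open>Cen\<^bsub>Q\<^sub>s\<^esub>(Q\<^sup>~,Q\<^sup>~,G)\<close>; it is centric because \<open>H\<^sup>~\<close> is.\<close>
lemma Cen_k_of_tilde:
  assumes Hp: "p_subgroup G p H" and S: "is_tilde G p H S"
    and s: "s \<in> iso (G\<lparr>carrier := S\<rparr>) Qt" and sH: "s ` H = Qs"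
  shows "inv_into S s \<in> inj_hom Qt G" and "inj_class Qt G (inv_into S s) \<in> Cen_k p Qt Qs G"
proof -
  interpret G: group G by (rule grpG)
  have SG: "subgroup S G" using is_tildeD(1)[OF S] .
  have Sc: "S \<subseteq> carrier G" using SG subgroup.subset by blast
  have HS: "H \<subseteq> S" using G.tilde_contains[OF finG pr Hp S] .
  have grpS: "group (G\<lparr>carrier := S\<rparr>)" using subgroup.subgroup_is_group[OF SG grpG] .
  have s_inj: "inj_on s S" using s unfolding iso_def bij_betw_def by auto
  define \<delta> where "\<delta> = inv_into S s"
  show di: "inv_into S s \<in> inj_hom Qt G" using iso_subgroup_inv_inj_hom(1)[OF grpS Sc s] .
  have dimg: "\<delta> ` carrier Qt = S" unfolding \<delta>_def using iso_subgroup_inv_inj_hom(2)[OF grpS Sc s] .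
  have dself: "\<delta> \<in> inj_class Qt G \<delta>" unfolding \<delta>_def using inj_class_self[OF grpG di] .
  have cent: "\<not> p dvd cz_order G (\<delta> ` carrier Qt)" unfolding dimg using G.tilde_centric[OF finG pr Hp S] .
  have dQs: "\<delta> ` Qs = H" unfolding \<delta>_def sH[symmetric] using inv_into_image_cancel[OF s_inj HS] .
  have pe: "pair_equiv (G\<lparr>carrier := S\<rparr>) H Qt Qs" unfolding pair_equiv_def using s sH by blast
  show "inj_class Qt G (inv_into S s) \<in> Cen_k p Qt Qs G"
    unfolding Cen_k_def Cen_def \<delta>_def[symmetric]
    using inj_class_Inj[OF di[folded \<delta>_def]] dself cent dQs S pe by blast
qed

text \<open>If \<open>\<alpha>(Q)\<close> is a \<open>p\<close>-subgroup whose pair \<open>(\<alpha>(Q), S)\<close> is identified with \<open>(Q\<^sub>s, Q\<^sup>~)\<close> by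
  \<open>s\<close>, then \<open>[\<alpha>] = \<psi>((s \<circ> \<alpha>) \<times> [s\<inverse>])\<close>.\<close>
lemma psi_hits_class:
  assumes a: "\<alpha> \<in> inj_hom Q G" and Hp: "p_subgroup G p (\<alpha> ` carrier Q)"
    and S: "is_tilde G p (\<alpha> ` carrier Q) S"
    and s: "s \<in> iso (G\<lparr>carrier := S\<rparr>) Qt" and sH: "s ` (\<alpha> ` carrier Q) = Qs"
  shows "\<exists>x\<in>Bal p Q Qt Qs G. psi Q G x = inj_class Q G \<alpha>"
proof -
  interpret G: group G by (rule grpG)
  have HS: "\<alpha> ` carrier Q \<subseteq> S" using G.tilde_contains[OF finG pr Hp S] .
  have s_inj: "inj_on s S" using s unfolding iso_def bij_betw_def by auto
  define \<delta> where "\<delta> = inv_into S s"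
  define \<gamma> where "\<gamma> = (\<lambda>q\<in>carrier Q. s (\<alpha> q))"
  have gi: "\<gamma> \<in> inj_hom Q Qt" unfolding \<gamma>_def using iso_comp_inj_hom[OF grpQ a HS s] .
  have "\<gamma> ` carrier Q = s ` (\<alpha> ` carrier Q)" unfolding \<gamma>_def by (auto simp: image_image)
  then have gR: "\<gamma> \<in> R_set Q Qt Qs" unfolding R_set_def using gi sH by (simp add: \<gamma>_def)
  have di: "\<delta> \<in> inj_hom Qt G" and c'C: "inj_class Qt G \<delta> \<in> Cen_k p Qt Qs G"
    unfolding \<delta>_def using Cen_k_of_tilde[OF Hp S s sH] .
  have A: "(\<gamma>, inj_class Qt G \<delta>) \<in> AA" using gR c'C by simp
  define x where "x = BR `` {(\<gamma>, inj_class Qt G \<delta>)}"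
  have xB: "x \<in> Bal p Q Qt Qs G" unfolding x_def Bal_def by (rule quotientI[OF A])
  have self: "(\<gamma>, inj_class Qt G \<delta>) \<in> x" unfolding x_def using equiv_class_self[OF bal_equiv A] .
  have "psi Q G x = inj_class Q G (\<lambda>q. \<delta> (\<gamma> q))"
    using psi_wd[OF xB self] inj_class_self[OF grpG di] by simp
  also have "\<dots> = inj_class Q G \<alpha>"
  proof (rule inj_class_cong[OF grpQ])
    fix q assume q: "q \<in> carrier Q"
    have "\<alpha> q \<in> S" using q HS by blast
    then show "\<alpha> q = \<delta> (\<gamma> q)" unfolding \<gamma>_def \<delta>_def using q inv_into_f_f[OF s_inj] by simp
  qed
  finally show ?thesis using xB by blast
qed

end



section \<open>The whole family of pairs\<close>

locale pair_family =
  fixes p :: nat and G :: "'g monoid" and Q :: "'q monoid"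
    and K :: "'k set" and Qt :: "'k \<Rightarrow> 'h monoid" and Qs :: "'k \<Rightarrow> 'h set"
  assumes pr: "Factorial_Ring.prime p"
    and grpG: "group G" and finG: "finite (carrier G)"
    and grpQ: "group Q" and pQ: "\<exists>n. card (carrier Q) = p ^ n"
    and fam_grp: "\<forall>k\<in>K. group (Qt k) \<and> (\<exists>n. card (carrier (Qt k)) = p ^ n) \<and> subgroup (Qs k) (Qt k)"
    and fam_arise: "\<forall>k\<in>K. \<exists>H S. arising G p H \<and> is_tilde G p H S \<and>
                      pair_equiv (Qt k) (Qs k) (G\<lparr>carrier := S\<rparr>) H"
    and fam_ineq: "\<forall>k\<in>K. \<forall>l\<in>K. k \<noteq> l \<longrightarrow> \<not> pair_equiv (Qt k) (Qs k) (Qt l) (Qs l)"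
    and fam_cover: "\<forall>H S. arising G p H \<and> is_tilde G p H S \<longrightarrow>
                      (\<exists>k\<in>K. pair_equiv (G\<lparr>carrier := S\<rparr>) H (Qt k) (Qs k))"
begin

lemma pgroup_summand_k: "k \<in> K \<Longrightarrow> pgroup_summand p Q (Qt k) (Qs k) G"
  using fam_grp grpG grpQ finG pr unfolding pgroup_summand_def pgroup_summand_axioms_def summand_def by blast

text \<open>Every pair of the family is proper, since it arises in \<open>G\<close>.\<close>
lemma Qs_proper:
  assumes k: "k \<in> K"
  shows "card (Qs k) < card (carrier (Qt k))"
proof -
  interpret G: group G by (rule grpG)
  obtain H S where A: "arising G p H" and S: "is_tilde G p H S"
    and pe: "pair_equiv (Qt k) (Qs k) (G\<lparr>carrier := S\<rparr>) H" using fam_arise k by blast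
  obtain s where s: "s \<in> iso (Qt k) (G\<lparr>carrier := S\<rparr>)" "s ` Qs k = H" using pe unfolding pair_equiv_def by blast
  have sb: "bij_betw s (carrier (Qt k)) S" using s(1) unfolding iso_def by simp
  have Qsc: "Qs k \<subseteq> carrier (Qt k)" using fam_grp k subgroup.subset by blast
  have "card H = card (Qs k)" using s(2) sb Qsc unfolding bij_betw_def by (metis card_image inj_on_subset)
  moreover have "card S = card (carrier (Qt k))" using sb bij_betw_same_card by metis
  moreover have "card H < card S" using G.arising_lt[OF finG pr A S] .
  ultimately show ?thesis by simp
qed

text \<open>The summand is determined by the image \<open>\<delta>(Q\<^sub>s)\<close>: the pairs \<open>(Q\<^sub>s,Q\<^sup>~)\<close> of two summands
  sharing it are both equivalent to \<open>(P, P\<^sup>~)\<close>, hence equal by inequivalence of the family.\<close>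
lemma Cen_k_index_unique:
  assumes k1: "k1 \<in> K" and k2: "k2 \<in> K"
    and c1: "c1 \<in> Cen_k p (Qt k1) (Qs k1) G" and d1: "\<delta>1 \<in> c1"
    and c2: "c2 \<in> Cen_k p (Qt k2) (Qs k2) G" and d2: "\<delta>2 \<in> c2"
    and img: "\<delta>1 ` Qs k1 = \<delta>2 ` Qs k2"
  shows "k1 = k2"
proof -
  interpret G: group G by (rule grpG)
  interpret B1: pgroup_summand p Q "Qt k1" "Qs k1" G using pgroup_summand_k[OF k1] .
  interpret B2: pgroup_summand p Q "Qt k2" "Qs k2" G using pgroup_summand_k[OF k2] .
  have d1i: "\<delta>1 \<in> inj_hom (Qt k1) G" using Inj_sub[OF grpG Cen_k_Inj[OF c1]] d1 by blast
  have d2i: "\<delta>2 \<in> inj_hom (Qt k2) G" using Inj_sub[OF grpG Cen_k_Inj[OF c2]] d2 by blast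
  define P where "P = \<delta>1 ` Qs k1"
  define T1 where "T1 = \<delta>1 ` carrier (Qt k1)"
  define T2 where "T2 = \<delta>2 ` carrier (Qt k2)"
  have til1: "is_tilde G p P T1" unfolding P_def T1_def using B1.Cen_k_tilde[OF c1 d1] .
  have til2: "is_tilde G p P T2" unfolding P_def T2_def img using B2.Cen_k_tilde[OF c2 d2] .
  have Pp: "p_subgroup G p P" unfolding P_def using B1.image_Qs_p_subgroup(1)[OF d1i] .
  have Pc: "P \<subseteq> carrier G" using Pp subgroup.subset unfolding p_subgroup_def by blast
  obtain c where c: "c \<in> centralizer G P" and cT: "(\<lambda>y. c \<otimes>\<^bsub>G\<^esub> y \<otimes>\<^bsub>G\<^esub> inv\<^bsub>G\<^esub> c) ` T1 = T2"
    using G.tildes_conj[OF finG pr Pp til1 til2] by blast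
  have cc: "c \<in> carrier G" using c unfolding centralizer_def by blast
  interpret C: giso G G "\<lambda>y. c \<otimes>\<^bsub>G\<^esub> y \<otimes>\<^bsub>G\<^esub> inv\<^bsub>G\<^esub> c" using giso_conj[OF grpG cc] .
  have T1c: "T1 \<subseteq> carrier G" unfolding T1_def using inj_hom_carrier[OF d1i] by blast
  have pe1: "pair_equiv (Qt k1) (Qs k1) (G\<lparr>carrier := T1\<rparr>) P"
    unfolding P_def T1_def using pair_equiv_iso[OF inj_hom_iso_img[OF d1i]] .
  have pe2: "pair_equiv (G\<lparr>carrier := T1\<rparr>) P (G\<lparr>carrier := T2\<rparr>) P"
    using pair_equiv_iso[OF C.f_restrict_iso[OF T1c], of P] cT G.conj_img_fix[OF c Pc] by simp
  have "pair_equiv (Qt k2) (Qs k2) (G\<lparr>carrier := T2\<rparr>) P"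
    unfolding P_def T2_def img using pair_equiv_iso[OF inj_hom_iso_img[OF d2i]] .
  then have pe3: "pair_equiv (G\<lparr>carrier := T2\<rparr>) P (Qt k2) (Qs k2)"
    using pair_equiv_sym[OF B2.grpQt B2.Qs_carrier] by blast
  show ?thesis using pair_equiv_trans[OF pair_equiv_trans[OF pe1 pe2] pe3] fam_ineq k1 k2 by blast
qed

lemma psi_injective:
  assumes k1: "k1 \<in> K" and k2: "k2 \<in> K"
    and x1: "x1 \<in> Bal p Q (Qt k1) (Qs k1) G" and x2: "x2 \<in> Bal p Q (Qt k2) (Qs k2) G"
    and eq: "psi Q G x1 = psi Q G x2"
  shows "k1 = k2 \<and> x1 = x2"
proof -
  interpret B1: pgroup_summand p Q "Qt k1" "Qs k1" G using pgroup_summand_k[OF k1] .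
  interpret B2: pgroup_summand p Q "Qt k2" "Qs k2" G using pgroup_summand_k[OF k2] .
  obtain \<gamma>1 c1 \<delta>1 where "(SOME r. r \<in> x1) = (\<gamma>1, c1)" and r1: "(\<gamma>1, c1) \<in> x1"
    and g1: "\<gamma>1 \<in> R_set Q (Qt k1) (Qs k1)"
    and c1: "c1 \<in> Cen_k p (Qt k1) (Qs k1) G" and d1: "\<delta>1 \<in> c1" and d1i: "\<delta>1 \<in> inj_hom (Qt k1) G"
    and ps1: "psi Q G x1 = inj_class Q G (\<lambda>q. \<delta>1 (\<gamma>1 q))"
    by (rule B1.Bal_rep[OF x1])
  obtain \<gamma>2 c2 \<delta>2 where "(SOME r. r \<in> x2) = (\<gamma>2, c2)" and r2: "(\<gamma>2, c2) \<in> x2"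
    and g2: "\<gamma>2 \<in> R_set Q (Qt k2) (Qs k2)"
    and c2: "c2 \<in> Cen_k p (Qt k2) (Qs k2) G" and d2: "\<delta>2 \<in> c2" and d2i: "\<delta>2 \<in> inj_hom (Qt k2) G"
    and ps2: "psi Q G x2 = inj_class Q G (\<lambda>q. \<delta>2 (\<gamma>2 q))"
    by (rule B2.Bal_rep[OF x2])
  have "(\<lambda>q. \<delta>2 (\<gamma>2 q)) \<in> inj_class Q G (\<lambda>q. \<delta>1 (\<gamma>1 q))"
    using inj_class_self[OF grpG inj_hom_comp[OF R_setD(1)[OF g2] d2i]] ps1 ps2 eq by simp
  then obtain g where g: "g \<in> carrier G"
    and eg: "\<forall>q\<in>carrier Q. \<delta>2 (\<gamma>2 q) = g \<otimes>\<^bsub>G\<^esub> \<delta>1 (\<gamma>1 q) \<otimes>\<^bsub>G\<^esub> inv\<^bsub>G\<^esub> g"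
    unfolding inj_class_def conj_equiv_def by blast
  \<comment> \<open>replace \<open>\<delta>\<^sub>1\<close> by its \<open>g\<close>-conjugate, so that the two composites agree\<close>
  define \<delta>1' where "\<delta>1' = (\<lambda>y. g \<otimes>\<^bsub>G\<^esub> \<delta>1 y \<otimes>\<^bsub>G\<^esub> inv\<^bsub>G\<^esub> g)"
  have d1'i: "\<delta>1' \<in> inj_hom (Qt k1) G" unfolding \<delta>1'_def using conj_conj_hom[OF grpG d1i g] .
  have "(\<delta>1, \<delta>1') \<in> conj_equiv (Qt k1) G" using conj_by[OF d1i g d1'i] unfolding \<delta>1'_def by simp
  then have d1': "\<delta>1' \<in> c1" using Inj_closed[OF grpG Cen_k_Inj[OF c1] d1] by blast
  have eqQ: "\<delta>2 (\<gamma>2 q) = \<delta>1' (\<gamma>1 q)" if "q \<in> carrier Q" for q using eg that unfolding \<delta>1'_def by simp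
  have "\<delta>1' ` Qs k1 = (\<lambda>q. \<delta>1' (\<gamma>1 q)) ` carrier Q" using R_set_comp_image[OF g1, where \<delta>=\<delta>1'] by simp
  also have "\<dots> = (\<lambda>q. \<delta>2 (\<gamma>2 q)) ` carrier Q" using eqQ by (intro image_cong) auto
  also have "\<dots> = \<delta>2 ` Qs k2" using R_set_comp_image[OF g2] .
  finally have keq: "k1 = k2" using Cen_k_index_unique[OF k1 k2 c1 d1' c2 d2] by blast
  then have "((\<gamma>1, c1), (\<gamma>2, c2)) \<in> B1.BR"
    using B1.bal_rel_of_same_composite[OF _ _ d1' d2 eqQ] g1 c1 g2 c2 by simp
  moreover have "x1 = B1.BR `` {(\<gamma>1, c1)}" using quot_eq_class[OF B1.bal_equiv] x1 r1 unfolding Bal_def by blast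
  moreover have "x2 = B1.BR `` {(\<gamma>2, c2)}" using quot_eq_class[OF B1.bal_equiv] x2 r2 keq unfolding Bal_def by blast
  ultimately have "x1 = x2" using equiv_class_eq[OF B1.bal_equiv] by simp
  then show ?thesis using keq by simp
qed

lemma nCen_image_arising:
  assumes cc: "cc \<in> nCen p Q G" and a: "\<alpha> \<in> cc"
  shows "arising G p (\<alpha> ` carrier Q)" and "\<alpha> \<in> inj_hom Q G"
proof -
  have ccI: "cc \<in> Inj Q G" and ncen: "cc \<notin> Cen p Q G" using cc unfolding nCen_def by auto
  show ai: "\<alpha> \<in> inj_hom Q G" using Inj_sub[OF grpG ccI] a by blast
  have Hs: "subgroup (\<alpha> ` carrier Q) G" using inj_hom_subgroup[OF grpQ grpG ai] .
  obtain n where n: "card (carrier Q) = p ^ n" using pQ by blast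
  have "p_subgroup G p (\<alpha> ` carrier Q)" unfolding p_subgroup_def using Hs inj_hom_card[OF ai] n by auto
  moreover have "p dvd cz_order G (\<alpha> ` carrier Q)" using ncen ccI a unfolding Cen_def by blast
  ultimately show "arising G p (\<alpha> ` carrier Q)" unfolding arising_def by blast
qed

text \<open>Surjectivity: the pair \<open>(\<alpha>(Q), \<alpha>(Q)\<^sup>~)\<close> of a non-centric class \<open>[\<alpha>]\<close> is equivalent to a
  member of the family, and \<open>[\<alpha>]\<close> is hit in the corresponding summand.\<close>
lemma psi_surjective:
  assumes cc: "cc \<in> nCen p Q G"
  shows "\<exists>k\<in>K. \<exists>x\<in>Bal p Q (Qt k) (Qs k) G. psi Q G x = cc"
proof -
  interpret G: group G by (rule grpG)
  have ccI: "cc \<in> Inj Q G" using cc unfolding nCen_def by auto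
  obtain \<alpha> where a: "\<alpha> \<in> cc" using Inj_nonempty[OF grpG ccI] by blast
  have ar: "arising G p (\<alpha> ` carrier Q)" and ai: "\<alpha> \<in> inj_hom Q G"
    using nCen_image_arising[OF cc a] by blast+
  have Hp: "p_subgroup G p (\<alpha> ` carrier Q)" using ar unfolding arising_def by blast
  obtain S where S: "is_tilde G p (\<alpha> ` carrier Q) S"
    using G.tilde_exists[OF finG pr] Hp unfolding p_subgroup_def by blast
  obtain k where k: "k \<in> K" and pe: "pair_equiv (G\<lparr>carrier := S\<rparr>) (\<alpha> ` carrier Q) (Qt k) (Qs k)"
    using fam_cover ar S by blast
  obtain s where s: "s \<in> iso (G\<lparr>carrier := S\<rparr>) (Qt k)" and sH: "s ` (\<alpha> ` carrier Q) = Qs k"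
    using pe unfolding pair_equiv_def by blast
  obtain x where "x \<in> Bal p Q (Qt k) (Qs k) G" "psi Q G x = inj_class Q G \<alpha>"
    using pgroup_summand.psi_hits_class[OF pgroup_summand_k[OF k] ai Hp S s sH] by blast
  moreover have "inj_class Q G \<alpha> = cc" using Inj_class[OF grpG ccI a] by simp
  ultimately show ?thesis using k by blast
qed

lemma psi_bij:
  "bij_betw (\<lambda>(k, x). psi Q G x) (SIGMA k:K. Bal p Q (Qt k) (Qs k) G) (nCen p Q G)"
  unfolding bij_betw_def
proof
  show "inj_on (\<lambda>(k, x). psi Q G x) (SIGMA k:K. Bal p Q (Qt k) (Qs k) G)"
  proof (rule inj_onI)
    fix u v assume "u \<in> (SIGMA k:K. Bal p Q (Qt k) (Qs k) G)" "v \<in> (SIGMA k:K. Bal p Q (Qt k) (Qs k) G)"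
      "(\<lambda>(k, x). psi Q G x) u = (\<lambda>(k, x). psi Q G x) v"
    moreover obtain k1 x1 where u: "u = (k1, x1)" by (cases u)
    moreover obtain k2 x2 where v: "v = (k2, x2)" by (cases v)
    ultimately have "k1 \<in> K" "k2 \<in> K" "x1 \<in> Bal p Q (Qt k1) (Qs k1) G" "x2 \<in> Bal p Q (Qt k2) (Qs k2) G"
      "psi Q G x1 = psi Q G x2" by auto
    then show "u = v" using psi_injective u v by blast
  qed
  have into: "psi Q G x \<in> nCen p Q G" if "k \<in> K" "x \<in> Bal p Q (Qt k) (Qs k) G" for k x
    using pgroup_summand.psi_nCen[OF pgroup_summand_k[OF that(1)] Qs_proper[OF that(1)] that(2)] .
  have onto: "cc \<in> (\<lambda>(k, x). psi Q G x) ` (SIGMA k:K. Bal p Q (Qt k) (Qs k) G)"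
    if ncc: "cc \<in> nCen p Q G" for cc
  proof -
    obtain k x where "k \<in> K" "x \<in> Bal p Q (Qt k) (Qs k) G" "psi Q G x = cc"
      using psi_surjective[OF ncc] by blast
    then show ?thesis by (intro image_eqI[where x="(k, x)"]) auto
  qed
  show "(\<lambda>(k, x). psi Q G x) ` (SIGMA k:K. Bal p Q (Qt k) (Qs k) G) = nCen p Q G"
    using into onto by auto
qed


lemma psi_well_defined:
  "\<forall>k\<in>K. \<forall>x\<in>Bal p Q (Qt k) (Qs k) G. \<forall>r\<in>x. \<forall>\<delta>\<in>snd r.
     psi Q G x = inj_class Q G (\<lambda>q. \<delta> (fst r q))"
proof (intro ballI)
  fix k x r \<delta> assume k: "k \<in> K" and x: "x \<in> Bal p Q (Qt k) (Qs k) G" and "r \<in> x" "\<delta> \<in> snd r"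
  then show "psi Q G x = inj_class Q G (\<lambda>q. \<delta> (fst r q))"
    using summand.psi_wd[OF pgroup_summand.axioms(1)[OF pgroup_summand_k[OF k]] x] by blast
qed

lemma psi_equivariant_family:
  "\<forall>\<phi>\<in>iso Q Q. \<forall>k\<in>K. \<forall>x\<in>Bal p Q (Qt k) (Qs k) G.
     act_bal p Q (Qt k) (Qs k) G \<phi> x \<in> Bal p Q (Qt k) (Qs k) G \<and>
     psi Q G (act_bal p Q (Qt k) (Qs k) G \<phi> x) = act_inj Q G \<phi> (psi Q G x)"
proof (intro ballI)
  fix \<phi> k x assume "\<phi> \<in> iso Q Q" and k: "k \<in> K" and "x \<in> Bal p Q (Qt k) (Qs k) G"
  then show "act_bal p Q (Qt k) (Qs k) G \<phi> x \<in> Bal p Q (Qt k) (Qs k) G \<and>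
      psi Q G (act_bal p Q (Qt k) (Qs k) G \<phi> x) = act_inj Q G \<phi> (psi Q G x)"
    using pgroup_summand.psi_equivariant[OF pgroup_summand_k[OF k]] by blast
qed

lemma psi_natural_family:
  fixes G' :: "'g2 monoid"
  shows "\<forall>f. group G' \<and> f \<in> iso G G' \<longrightarrow>
     (\<forall>k\<in>K. \<forall>x\<in>Bal p Q (Qt k) (Qs k) G.
        map_bal p Q (Qt k) (Qs k) G' f x \<in> Bal p Q (Qt k) (Qs k) G' \<and>
        psi Q G' (map_bal p Q (Qt k) (Qs k) G' f x) = map_inj Q G' f (psi Q G x))"
proof (intro allI impI ballI)
  fix f k x assume f: "group G' \<and> f \<in> iso G G'" and k: "k \<in> K" and x: "x \<in> Bal p Q (Qt k) (Qs k) G"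
  have "giso G G' f" using f grpG by (intro giso.intro giso_axioms.intro) auto
  then show "map_bal p Q (Qt k) (Qs k) G' f x \<in> Bal p Q (Qt k) (Qs k) G' \<and>
      psi Q G' (map_bal p Q (Qt k) (Qs k) G' f x) = map_inj Q G' f (psi Q G x)"
    using pgroup_summand.psi_natural[OF pgroup_summand_k[OF k] _ x] by blast
qed

end


theorem lemma4:
  fixes p :: nat
    and G :: "'g monoid" and Q :: "'q monoid"
    and K :: "'k set" and Qt :: "'k \<Rightarrow> 'h monoid" and Qs :: "'k \<Rightarrow> 'h set"
    and G' :: "'g2 monoid"
  assumes "Factorial_Ring.prime p"
    and "group G" and "finite (carrier G)"
    and "group Q" and "\<exists>n. card (carrier Q) = p ^ n"
    and fam_grp: "\<forall>k\<in>K. group (Qt k) \<and> (\<exists>n. card (carrier (Qt k)) = p ^ n) \<and> subgroup (Qs k) (Qt k)"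
    and fam_arise: "\<forall>k\<in>K. \<exists>H S. arising G p H \<and> is_tilde G p H S \<and>
                      pair_equiv (Qt k) (Qs k) (G\<lparr>carrier := S\<rparr>) H"
    and fam_ineq: "\<forall>k\<in>K. \<forall>l\<in>K. k \<noteq> l \<longrightarrow> \<not> pair_equiv (Qt k) (Qs k) (Qt l) (Qs l)"
    and fam_cover: "\<forall>H S. arising G p H \<and> is_tilde G p H S \<longrightarrow>
                      (\<exists>k\<in>K. pair_equiv (G\<lparr>carrier := S\<rparr>) H (Qt k) (Qs k))"
  shows
    \<comment> \<open>well-defined: independent of representatives, lands in nCen\<close>
    "(\<forall>k\<in>K. \<forall>x\<in>Bal p Q (Qt k) (Qs k) G. \<forall>r\<in>x. \<forall>\<delta>\<in>snd r.
        psi Q G x = inj_class Q G (\<lambda>q. \<delta> (fst r q)))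
     \<and> bij_betw (\<lambda>(k, x). psi Q G x) (SIGMA k:K. Bal p Q (Qt k) (Qs k) G) (nCen p Q G)
     \<comment> \<open>Out(Q)-equivariance\<close>
     \<and> (\<forall>\<phi>\<in>iso Q Q. \<forall>k\<in>K. \<forall>x\<in>Bal p Q (Qt k) (Qs k) G.
          act_bal p Q (Qt k) (Qs k) G \<phi> x \<in> Bal p Q (Qt k) (Qs k) G \<and>
          psi Q G (act_bal p Q (Qt k) (Qs k) G \<phi> x) = act_inj Q G \<phi> (psi Q G x))
     \<comment> \<open>naturality in G (along group isomorphisms G \<rightarrow> G')\<close>
     \<and> (\<forall>f. group G' \<and> f \<in> iso G G' \<longrightarrow>
          (\<forall>k\<in>K. \<forall>x\<in>Bal p Q (Qt k) (Qs k) G.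
             map_bal p Q (Qt k) (Qs k) G' f x \<in> Bal p Q (Qt k) (Qs k) G' \<and>
             psi Q G' (map_bal p Q (Qt k) (Qs k) G' f x) = map_inj Q G' f (psi Q G x)))"
proof -
  interpret F: pair_family p G Q K Qt Qs using pair_family.intro[OF assms] .
  show ?thesis
    by (intro conjI F.psi_well_defined F.psi_bij F.psi_equivariant_family F.psi_natural_family)
qed

end
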